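(* Let $m\ge2$ and let $a_1,a_2,b_1,b_2,b_3,c_1,\dots,c_{2m}\in\mathbb{C}$ with $a_1\ne a_2$, $b_1,b_2,b_3$ pairwise distinct, $c_1,\dots,c_{2m}$ pairwise distinct, and $ma_1+ma_2=b_1+(m-1)b_2+mb_3+\sum_{i=1}^{2m}c_i$. Let ${\bf B},{\bf C}$ be the $2m\times 2m$ matrices defined in the context ("even family"). Then ${\bf A}={\bf B}+{\bf C}$ is diagonalizable, with eigenvalues $a_1$ of multiplicity $m$ and $a_2$ of multiplicity $m$.
   Context: Notation: $p_i^{jk}=c_i+b_j-a_k$ and $q_{ij}=c_i+c_j+b_2+b_3-a_1-a_2$; empty products are $1$. Rows/columns are indexed $1,\dots,2m$. The matrix ${\bf B}$ has $B_{11}=b_1$, $B_{1+i,1+i}=b_2$ ($1\le i\le m-1$), $B_{m+i,m+i}=b_3$ ($1\le i\le m$), the entries $B_{1,1+j}=(-1)^{m+1-j}\frac{\prod_{k=j+1}^m q_{k,2m-j}}{\prod_{k=m+1}^{2m-1-j}(c_k-c_{2m-j})}$ ($1\le j\le m-1$), $B_{1,m+j}=(-1)^{m-j}p^{31}_{m+1-j}\frac{\prod_{k=m+j}^{2m-1}q_{m+1-j,k}}{\prod_{k=1}^{m-j}(c_k-c_{m+1-j})}$ ($1\le j\le m$), $B_{1+i,m+j}=(-1)^{m-j}p^{31}_{m+1-j}\frac{\prod_{k=1,k\ne m+1-j}^{i}q_{k,2m-i}\prod_{k=m+j,k\ne 2m-i}^{2m-1}q_{m+1-j,k}}{\prod_{k=2m+1-i}^{2m-1}(c_{2m-i}-c_k)\prod_{k=1}^{m-j}(c_k-c_{m+1-j})}$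 ($1\le i\le m-1$, $1\le j\le m$), and all other entries $0$. The matrix ${\bf C}$ has $C_{11}=c_{2m}$, $C_{1+i,1+i}=c_{2m-i}$ ($1\le i\le m-1$), $C_{m+i,m+i}=c_{m+1-i}$ ($1\le i\le m$), the entries $C_{1+i,1}=-\frac{\prod_{k=1}^i q_{k,2m-i}}{\prod_{k=2m+1-i}^{2m-1}(c_{2m-i}-c_k)}$ ($1\le i\le m-1$), $C_{m+i,1}=-p^{32}_{m+1-i}\frac{\prod_{k=m+1}^{m-1+i}q_{m+1-i,k}}{\prod_{k=m+2-i}^m(c_{m+1-i}-c_k)}$ ($1\le i\le m$), $C_{m+i,1+j}=(-1)^{m+1-j}p^{32}_{m+1-i}\frac{\prod_{k=m+1,k\ne2m-j}^{m-1+i}q_{m+1-i,k}\prod_{k=j+1,k\ne m+1-i}^m q_{k,2m-j}}{\prod_{k=m+2-i}^m(c_{m+1-i}-c_k)\prod_{k=m+1}^{2m-1-j}(c_k-c_{2m-j})}$ ($1\le i\le m$, $1\le j\le m-1$), and all other entries $0$. *)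

theory Defs
  imports "Jordan_Normal_Form.Char_Poly" "HOL-Computational_Algebra.Polynomial"
begin

text \<open>Notation of the paper (indices 1-based). p31 i = p_i^{31}, p32 i = p_i^{32}.\<close>

definition qq :: "complex \<Rightarrow> complex \<Rightarrow> complex \<Rightarrow> complex \<Rightarrow> (nat \<Rightarrow> complex) \<Rightarrow> nat \<Rightarrow> nat \<Rightarrow> complex" where
  "qq a1 a2 b2 b3 c i j = c i + c j + b2 + b3 - a1 - a2"

definition pp :: "(nat \<Rightarrow> complex) \<Rightarrow> complex \<Rightarrow> complex \<Rightarrow> nat \<Rightarrow> complex" where
  "pp c bj ak i = c i + bj - ak"

definition B_entry :: "nat \<Rightarrow> complex \<Rightarrow> complex \<Rightarrow> complex \<Rightarrow> complex \<Rightarrow> complex \<Rightarrow> (nat \<Rightarrow> complex) \<Rightarrow> nat \<Rightarrow> nat \<Rightarrow> complex" where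
  "B_entry m a1 a2 b1 b2 b3 c r s =
    (let q = qq a1 a2 b2 b3 c; p31 = pp c b3 a1 in
     if r = 1 \<and> s = 1 then b1
     else if 2 \<le> r \<and> r \<le> m \<and> s = r then b2
     else if m + 1 \<le> r \<and> r \<le> 2*m \<and> s = r then b3
     else if r = 1 \<and> 2 \<le> s \<and> s \<le> m then
       (let j = s - 1 in
        (-1)^(m+1-j) * (\<Prod>k\<in>{j+1..m}. q k (2*m-j)) / (\<Prod>k\<in>{m+1..2*m-1-j}. (c k - c (2*m-j))))
     else if r = 1 \<and> m + 1 \<le> s \<and> s \<le> 2*m then
       (let j = s - m in
        (-1)^(m-j) * p31 (m+1-j) * (\<Prod>k\<in>{m+j..2*m-1}. q (m+1-j) k) / (\<Prod>k\<in>{1..m-j}. (c k - c (m+1-j))))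
     else if 2 \<le> r \<and> r \<le> m \<and> m + 1 \<le> s \<and> s \<le> 2*m then
       (let i = r - 1; j = s - m in
        (-1)^(m-j) * p31 (m+1-j)
          * (\<Prod>k\<in>{1..i} - {m+1-j}. q k (2*m-i)) * (\<Prod>k\<in>{m+j..2*m-1} - {2*m-i}. q (m+1-j) k)
          / ((\<Prod>k\<in>{2*m+1-i..2*m-1}. (c (2*m-i) - c k)) * (\<Prod>k\<in>{1..m-j}. (c k - c (m+1-j)))))
     else 0)"

definition C_entry :: "nat \<Rightarrow> complex \<Rightarrow> complex \<Rightarrow> complex \<Rightarrow> complex \<Rightarrow> (nat \<Rightarrow> complex) \<Rightarrow> nat \<Rightarrow> nat \<Rightarrow> complex" where
  "C_entry m a1 a2 b2 b3 c r s =
    (let q = qq a1 a2 b2 b3 c; p32 = pp c b3 a2 in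
     if r = 1 \<and> s = 1 then c (2*m)
     else if 2 \<le> r \<and> r \<le> m \<and> s = r then c (2*m - (r - 1))
     else if m + 1 \<le> r \<and> r \<le> 2*m \<and> s = r then c (m + 1 - (r - m))
     else if 2 \<le> r \<and> r \<le> m \<and> s = 1 then
       (let i = r - 1 in
        - (\<Prod>k\<in>{1..i}. q k (2*m-i)) / (\<Prod>k\<in>{2*m+1-i..2*m-1}. (c (2*m-i) - c k)))
     else if m + 1 \<le> r \<and> r \<le> 2*m \<and> s = 1 then
       (let i = r - m in
        - p32 (m+1-i) * (\<Prod>k\<in>{m+1..m-1+i}. q (m+1-i) k) / (\<Prod>k\<in>{m+2-i..m}. (c (m+1-i) - c k)))
     else if m + 1 \<le> r \<and> r \<le> 2*m \<and> 2 \<le> s \<and> s \<le> m then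
       (let i = r - m; j = s - 1 in
        (-1)^(m+1-j) * p32 (m+1-i)
          * (\<Prod>k\<in>{m+1..m-1+i} - {2*m-j}. q (m+1-i) k) * (\<Prod>k\<in>{j+1..m} - {m+1-i}. q k (2*m-j))
          / ((\<Prod>k\<in>{m+2-i..m}. (c (m+1-i) - c k)) * (\<Prod>k\<in>{m+1..2*m-1-j}. (c k - c (2*m-j)))))
     else 0)"

text \<open>JNF matrices are 0-based; entry (i,j) is the paper's entry (i+1,j+1).\<close>
definition matB :: "nat \<Rightarrow> complex \<Rightarrow> complex \<Rightarrow> complex \<Rightarrow> complex \<Rightarrow> complex \<Rightarrow> (nat \<Rightarrow> complex) \<Rightarrow> complex mat" where
  "matB m a1 a2 b1 b2 b3 c = mat (2*m) (2*m) (\<lambda>(i,j). B_entry m a1 a2 b1 b2 b3 c (i+1) (j+1))"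

definition matC :: "nat \<Rightarrow> complex \<Rightarrow> complex \<Rightarrow> complex \<Rightarrow> complex \<Rightarrow> (nat \<Rightarrow> complex) \<Rightarrow> complex mat" where
  "matC m a1 a2 b2 b3 c = mat (2*m) (2*m) (\<lambda>(i,j). C_entry m a1 a2 b2 b3 c (i+1) (j+1))"

definition diagonalizable :: "'a :: semiring_1 mat \<Rightarrow> bool" where
  "diagonalizable A \<longleftrightarrow> (\<exists>D. diagonal_mat D \<and> similar_mat A D)"

end

theory Submission
  imports Defs "Jordan_Normal_Form.Jordan_Normal_Form_Existence" "Jordan_Normal_Form.Jordan_Normal_Form_Uniqueness"
begin

hide_const (open) module.smult Coset.order

text \<open>
  The matrix A = B + C satisfies A^2 - (a1 + a2) A + a1 a2 = 0. For such a matrix every Jordan block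
  has size 1 and eigenvalue a1 or a2, and since the hypothesis on the parameters says that the trace
  of A is m (a1 + a2), both eigenvalues have multiplicity m.

  The quadratic identity is checked block by block. Put X i = b2 + c (2m - i) for i in I = {1..m-1}
  and Y j = b3 + c (m + 1 - j) for j in J = {1..m}; apart from the first row and column, the diagonal
  blocks of A on I and J are diag X and diag Y. Every entry of A^2 - (a1 + a2) A + a1 a2 then becomes
  a sum over the nodes Y j (or X i) of the shape f(t j) / prod (k \<noteq> j) (t j - t k), which
  Lagrange interpolation evaluates through the top coefficients of f. This needs the numbers
  q i j = X i + Y j - a1 - a2 to be nonzero; the general case follows by continuity after shifting
  all X i by a small t. The entry at the corner follows from all others, because A commutes with
  its own quadratic expression.
\<close>

section \<open>Matrices annihilated by two distinct linear factors\<close>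

definition trace_mat :: "'a::comm_ring_1 mat \<Rightarrow> 'a" where
  "trace_mat A = (\<Sum>i<dim_row A. A $$ (i,i))"

lemma trace_mat_mult_comm:
  assumes "A \<in> carrier_mat n k" "B \<in> carrier_mat k n"
  shows "trace_mat (A * B) = trace_mat (B * A)"
proof -
  have "trace_mat (A * B) = (\<Sum>i<n. \<Sum>j<k. A $$ (i,j) * B $$ (j,i))"
    using assms by (auto simp: trace_mat_def scalar_prod_def atLeast0LessThan intro!: sum.cong)
  also have "\<dots> = (\<Sum>j<k. \<Sum>i<n. B $$ (j,i) * A $$ (i,j))"
    by (subst sum.swap) (simp add: mult.commute)
  also have "\<dots> = trace_mat (B * A)"
    using assms by (auto simp: trace_mat_def scalar_prod_def atLeast0LessThan intro!: sum.cong)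
  finally show ?thesis .
qed

lemma trace_mat_similar:
  assumes "similar_mat A B"
  shows "trace_mat A = trace_mat B"
proof -
  from similar_matD[OF assms] obtain n P Q where carr: "{A, B, P, Q} \<subseteq> carrier_mat n n"
    and QP: "Q * P = 1\<^sub>m n" and A: "A = P * B * Q" by auto
  have "trace_mat A = trace_mat (Q * (P * B))"
    unfolding A using carr by (intro trace_mat_mult_comm[of _ n n]) auto
  also have "Q * (P * B) = (Q * P) * B"
    using carr by (subst assoc_mult_mat[of _ n n _ n _ n]) auto
  also have "\<dots> = B" using carr QP by auto
  finally show ?thesis .
qed

lemma trace_mat_jordan_matrix:
  "trace_mat (jordan_matrix n_as) = (\<Sum>(k,e)\<leftarrow>n_as. of_nat k * e)"
proof (induction n_as)
  case Nil
  then show ?case by (simp add: trace_mat_def jordan_matrix_def)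
next
  case (Cons ke n_as)
  obtain k e where ke: "ke = (k,e)" by force
  let ?J = "jordan_matrix (ke # n_as)" and ?s = "sum_list (map fst n_as)"
  have split: "(\<Sum>i<k+s. f i) = (\<Sum>i<k. f i) + (\<Sum>i<s. f (k+i))" for s and f :: "nat \<Rightarrow> 'a"
    by (induction s) (auto simp: add.assoc)
  have "trace_mat ?J = (\<Sum>i<k. ?J $$ (i,i)) + (\<Sum>i<?s. ?J $$ (k+i,k+i))"
    unfolding trace_mat_def ke by (simp add: split)
  also have "(\<Sum>i<k. ?J $$ (i,i)) = of_nat k * e"
    unfolding ke jordan_matrix_Cons by (simp add: index_mat_four_block)
  also have "(\<Sum>i<?s. ?J $$ (k+i,k+i)) = trace_mat (jordan_matrix n_as)"
    unfolding ke jordan_matrix_Cons trace_mat_def by (intro sum.cong) (auto simp: index_mat_four_block)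
  finally show ?case using Cons by (simp add: ke)
qed

lemma diagonal_mat_jordan_matrix:
  assumes "\<forall>(k,e)\<in>set n_as. k \<le> 1"
  shows "diagonal_mat (jordan_matrix n_as)"
  using assms
proof (induction n_as)
  case Nil
  then show ?case by (simp add: diagonal_mat_def jordan_matrix_def)
next
  case (Cons ke n_as)
  obtain k e where ke: "ke = (k,e)" by force
  from Cons have IH: "diagonal_mat (jordan_matrix n_as)" and k: "k \<le> 1" by (auto simp: ke)
  show ?case unfolding diagonal_mat_def
  proof (intro allI impI)
    fix i j assume i: "i < dim_row (jordan_matrix (ke # n_as))"
      and j: "j < dim_col (jordan_matrix (ke # n_as))" and ij: "i \<noteq> j"
    show "jordan_matrix (ke # n_as) $$ (i, j) = 0"
    proof (cases "i < k \<and> j < k")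
      case True
      with k ij show ?thesis by auto
    next
      case False
      then show ?thesis using i j ij IH k unfolding ke jordan_matrix_Cons diagonal_mat_def
        by (auto simp: index_mat_four_block)
    qed
  qed
qed

lemma jordan_block_sizes_two_eigenvalues:
  fixes a1 a2 :: "'a::comm_ring_1"
  assumes "\<forall>(k,e)\<in>set n_as. e = a1 \<or> e = a2" and "a1 \<noteq> a2"
  defines "size_of a \<equiv> sum_list (map fst (filter (\<lambda>ke. snd ke = a) n_as))"
  shows "sum_list (map fst n_as) = size_of a1 + size_of a2"
    and "(\<Sum>(k,e)\<leftarrow>n_as. of_nat k * e) = of_nat (size_of a1) * a1 + of_nat (size_of a2) * a2"
  using assms(1) unfolding size_of_def
  by (induction n_as) (use assms(2) in \<open>auto simp: algebra_simps\<close>)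

lemma sum_list_eq_imp_eq_if_le:
  fixes f g :: "'a \<Rightarrow> nat"
  assumes "sum_list (map f xs) = sum_list (map g xs)" and "\<And>x. g x \<le> f x" and "x \<in> set xs"
  shows "f x = g x"
  using assms
proof (induction xs)
  case (Cons y xs)
  have "sum_list (map g xs) \<le> sum_list (map f xs)" using Cons.prems(2) by (intro sum_list_mono)
  moreover have "g y \<le> f y" using Cons.prems(2) .
  ultimately have "f y = g y" "sum_list (map f xs) = sum_list (map g xs)"
    using Cons.prems(1) by simp_all
  then show ?case using Cons by auto
qed simp

lemma char_matrix_mult_index:
  assumes A: "A \<in> carrier_mat n n" and r: "r < n" and s: "s < n"
  shows "(char_matrix A x * char_matrix A y) $$ (r,s) =
    (A * A) $$ (r,s) - (x + y) * A $$ (r,s) + (if r = s then x * y else 0)"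
proof -
  have "(char_matrix A x * char_matrix A y) $$ (r,s) =
     (\<Sum>k<n. (A $$ (r,k) - (if r = k then x else 0)) * (A $$ (k,s) - (if k = s then y else 0)))"
    using A r s by (auto simp: char_matrix_def scalar_prod_def atLeast0LessThan intro!: sum.cong)
  also have "\<dots> = (\<Sum>k<n. A $$ (r,k) * A $$ (k,s)) + (\<Sum>k<n. if k = s then -y * A $$ (r,k) else 0)
     + (\<Sum>k<n. if r = k then -x * A $$ (k,s) else 0) + (\<Sum>k<n. if r = k then (if k = s then x * y else 0) else 0)"
  proof -
    have "\<And>k. (A $$ (r,k) - (if r = k then x else 0)) * (A $$ (k,s) - (if k = s then y else 0)) =
       A $$ (r,k) * A $$ (k,s) + (if k = s then -y * A $$ (r,k) else 0) + (if r = k then -x * A $$ (k,s) else 0)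
       + (if r = k then (if k = s then x * y else 0) else 0)" by (auto simp: algebra_simps)
    then show ?thesis by (simp add: sum.distrib)
  qed
  also have "\<dots> = (A * A) $$ (r,s) - (x + y) * A $$ (r,s) + (if r = s then x * y else 0)"
    using A r s by (auto simp: scalar_prod_def atLeast0LessThan algebra_simps)
  finally show ?thesis .
qed

lemma annihilated_square_index:
  assumes A: "A \<in> carrier_mat n n" and ann: "char_matrix A a1 * char_matrix A a2 = 0\<^sub>m n n"
    and r: "r < n" and s: "s < n"
  shows "(A * A) $$ (r,s) = (a1 + a2) * A $$ (r,s) - (if r = s then a1 * a2 else 0)"
proof -
  have "(A * A) $$ (r,s) - (a1 + a2) * A $$ (r,s) + (if r = s then a1 * a2 else 0) = 0"
    using char_matrix_mult_index[OF A r s, of a1 a2] ann r s by simp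
  then show ?thesis by (cases "r = s") (simp_all add: algebra_simps)
qed

lemma eigenvalue_annihilated:
  fixes A :: "'a::field mat"
  assumes A: "A \<in> carrier_mat n n" and ann: "char_matrix A a1 * char_matrix A a2 = 0\<^sub>m n n"
    and "eigenvalue A x"
  shows "x = a1 \<or> x = a2"
proof (rule ccontr)
  assume x: "\<not> (x = a1 \<or> x = a2)"
  have "char_matrix A x * char_matrix A (a1 + a2 - x) = ((a1 - x) * (x - a2)) \<cdot>\<^sub>m 1\<^sub>m n"
  proof (rule eq_matI)
    fix r s assume "r < dim_row (((a1 - x) * (x - a2)) \<cdot>\<^sub>m 1\<^sub>m n)"
      and "s < dim_col (((a1 - x) * (x - a2)) \<cdot>\<^sub>m 1\<^sub>m n)"
    then have r: "r < n" and s: "s < n" by auto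
    show "(char_matrix A x * char_matrix A (a1 + a2 - x)) $$ (r,s) = (((a1 - x) * (x - a2)) \<cdot>\<^sub>m 1\<^sub>m n) $$ (r,s)"
      unfolding char_matrix_mult_index[OF A r s] annihilated_square_index[OF A ann r s] using r s
      by (auto simp: algebra_simps)
  qed (use A in \<open>auto simp: char_matrix_def\<close>)
  then have "det (char_matrix A x) * det (char_matrix A (a1 + a2 - x)) = ((a1 - x) * (x - a2)) ^ n"
    using A by (subst det_mult[symmetric, of _ n]) (auto simp: det_smult)
  moreover have "det (char_matrix A x) = 0" using \<open>eigenvalue A x\<close> eigenvalue_det[OF A] by simp
  ultimately show False using x by simp
qed

lemma dim_gen_eigenspace_annihilated:
  fixes A :: "'a::field mat"
  assumes A: "A \<in> carrier_mat n n" and ann: "char_matrix A a1 * char_matrix A a2 = 0\<^sub>m n n"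
    and a12: "a1 \<noteq> a2" and e: "e = a1 \<or> e = a2"
  shows "dim_gen_eigenspace A e 2 = dim_gen_eigenspace A e 1"
proof -
  define N where "N = char_matrix A e"
  define e' where "e' = a1 + a2 - e"
  have N: "N \<in> carrier_mat n n" using A by (simp add: N_def)
  have ee': "e' \<noteq> e" "e * e' = a1 * a2" using e a12 by (auto simp: e'_def algebra_simps)
  have NN: "N * N = ((e' - e) \<cdot>\<^sub>m 1\<^sub>m n) * N"
  proof (rule eq_matI)
    fix r s assume "r < dim_row (((e' - e) \<cdot>\<^sub>m 1\<^sub>m n) * N)" and "s < dim_col (((e' - e) \<cdot>\<^sub>m 1\<^sub>m n) * N)"
    then have r: "r < n" and s: "s < n" using N by auto
    have "(N * N) $$ (r,s) = (A * A) $$ (r,s) - (e + e) * A $$ (r,s) + (if r = s then e * e else 0)"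
      unfolding N_def by (rule char_matrix_mult_index[OF A r s])
    also have "\<dots> = (e' - e) * (A $$ (r,s) - (if r = s then e else 0))"
      unfolding annihilated_square_index[OF A ann r s] using ee'(2) by (cases "r = s") (simp_all add: e'_def algebra_simps)
    also have "\<dots> = (((e' - e) \<cdot>\<^sub>m 1\<^sub>m n) * N) $$ (r,s)"
      using A N r s by (simp add: mult_smult_assoc_mat[of _ n n] N_def char_matrix_def)
    finally show "(N * N) $$ (r,s) = (((e' - e) \<cdot>\<^sub>m 1\<^sub>m n) * N) $$ (r,s)" .
  qed (use N in auto)
  have "mat_kernel (((e' - e) \<cdot>\<^sub>m 1\<^sub>m n) * N) = mat_kernel N"
    by (rule mat_kernel_mult_eq[of _ n n _ "(1 / (e' - e)) \<cdot>\<^sub>m 1\<^sub>m n"]) (use N ee' in auto)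
  moreover have "N ^\<^sub>m 2 = N * N" "N ^\<^sub>m 1 = N" using N by (auto simp: numeral_2_eq_2)
  ultimately show ?thesis
    unfolding dim_gen_eigenspace_def kernel_dim_def N_def[symmetric] using NN N by simp
qed

lemma jordan_nf_annihilated:
  fixes A :: "'a::field mat"
  assumes A: "A \<in> carrier_mat n n" and ann: "char_matrix A a1 * char_matrix A a2 = 0\<^sub>m n n"
    and a12: "a1 \<noteq> a2" and jnf: "jordan_nf A n_as"
  shows "\<forall>(k,e)\<in>set n_as. k = 1 \<and> (e = a1 \<or> e = a2)"
proof (intro ballI, clarify)
  fix k e assume ke: "(k,e) \<in> set n_as"
  have "k \<noteq> 0" using jnf ke unfolding jordan_nf_def by force
  moreover have "k \<le> order e (char_poly A)" by (rule jordan_nf_block_size_order_bound[OF jnf ke])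
  ultimately have "poly (char_poly A) e = 0" using order_root by fastforce
  then have e: "e = a1 \<or> e = a2"
    using eigenvalue_annihilated[OF A ann] eigenvalue_root_char_poly[OF A] by blast
  let ?sizes = "map fst (filter (\<lambda>(k', e'). e' = e) n_as)"
  \<comment> \<open>dim ker N^j sums min j k over the blocks of size k, so dim ker N^2 = dim ker N rules out k \<ge> 2.\<close>
  have "sum_list (map (min 2) ?sizes) = sum_list (map (min 1) ?sizes)"
    using dim_gen_eigenspace_annihilated[OF A ann a12 e] dim_gen_eigenspace[OF jnf, of e] by simp
  then have "min 2 k = min (1::nat) k"
    using ke by (intro sum_list_eq_imp_eq_if_le[of "min 2" ?sizes "min 1"]) force+
  with \<open>k \<noteq> 0\<close> e show "k = 1 \<and> (e = a1 \<or> e = a2)" by auto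
qed

lemma multiplicities_from_trace:
  fixes a1 a2 :: "'a::field_char_0"
  assumes "a1 \<noteq> a2" and "k1 + k2 = 2*m" and "of_nat k1 * a1 + of_nat k2 * a2 = of_nat m * (a1 + a2)"
  shows "k1 = m"
proof -
  have "(of_nat k1 - of_nat m) * (a1 - a2) = of_nat k1 * a1 + of_nat k2 * a2 - of_nat m * (a1 + a2)
      - (of_nat (k1 + k2) - 2 * of_nat m) * a2"
    by (simp add: algebra_simps)
  also have "\<dots> = 0" using assms(2,3) by simp
  finally show ?thesis using assms(1) by simp
qed

theorem annihilated_trace_spectrum:
  fixes A :: "complex mat"
  assumes A: "A \<in> carrier_mat (2*m) (2*m)" and ann: "char_matrix A a1 * char_matrix A a2 = 0\<^sub>m (2*m) (2*m)"
    and a12: "a1 \<noteq> a2" and m: "m \<ge> 1" and tr: "trace_mat A = of_nat m * (a1 + a2)"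
  shows "diagonalizable A \<and> (\<forall>x. eigenvalue A x \<longleftrightarrow> x = a1 \<or> x = a2)
    \<and> order a1 (char_poly A) = m \<and> order a2 (char_poly A) = m"
proof -
  obtain as where "char_poly A = (\<Prod>a\<leftarrow>as. [:- a, 1:])" using char_poly_factorized[OF A] by auto
  with jordan_nf_exists[OF A] obtain n_as where jnf: "jordan_nf A n_as" by auto
  have blocks: "\<forall>(k,e)\<in>set n_as. k = 1 \<and> (e = a1 \<or> e = a2)"
    by (rule jordan_nf_annihilated[OF A ann a12 jnf])
  have sim: "similar_mat A (jordan_matrix n_as)" using jnf unfolding jordan_nf_def by auto
  have diag: "diagonalizable A"
    unfolding diagonalizable_def using sim diagonal_mat_jordan_matrix[of n_as] blocks by fastforce
  define k1 where "k1 = order a1 (char_poly A)"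
  define k2 where "k2 = order a2 (char_poly A)"
  have "\<forall>(k,e)\<in>set n_as. e = a1 \<or> e = a2" using blocks by auto
  note sizes = jordan_block_sizes_two_eigenvalues[OF this a12, folded jordan_nf_order[OF jnf]]
  have "sum_list (map fst n_as) = 2*m"
    using similar_matD[OF sim] A by (metis carrier_matD(1) insert_subset jordan_matrix_dim(1))
  then have k12: "k1 + k2 = 2*m" using sizes(1) by (simp add: k1_def k2_def)
  have "of_nat k1 * a1 + of_nat k2 * a2 = of_nat m * (a1 + a2)"
    using tr trace_mat_similar[OF sim] trace_mat_jordan_matrix[of n_as] sizes(2)
    by (simp add: k1_def k2_def)
  with a12 k12 have k1: "k1 = m" by (rule multiplicities_from_trace)
  with k12 have k2: "k2 = m" by simp
  have "eigenvalue A a" if "a = a1 \<or> a = a2" for a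
  proof -
    have "order a (char_poly A) = m" using that k1 k2 by (auto simp: k1_def k2_def)
    then have "poly (char_poly A) a = 0" using m order_root by fastforce
    then show ?thesis using eigenvalue_root_char_poly[OF A] by simp
  qed
  then show ?thesis using diag eigenvalue_annihilated[OF A ann] k1 k2 by (auto simp: k1_def k2_def)
qed

section \<open>Lagrange interpolation sums\<close>

lemma lagrange_leading_coeff:
  fixes f :: "'a::field poly"
  assumes T: "finite T" and deg: "degree f < card T"
  shows "(\<Sum>x\<in>T. poly f x / (\<Prod>y\<in>T-{x}. x - y)) = coeff f (card T - 1)"
proof -
  define d where "d x = (\<Prod>y\<in>T-{x}. x - y)" for x
  define b where "b x = (\<Prod>y\<in>T-{x}. [:-y, 1:])" for x
  define L where "L = (\<Sum>x\<in>T. smult (poly f x / d x) (b x))"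
  have deg_b: "degree (b x) = card T - 1" if "x \<in> T" for x
    using that T by (simp add: b_def degree_prod_sum_eq)
  have lead_b: "coeff (b x) (card T - 1) = 1" if "x \<in> T" for x
    using deg_b[OF that] lead_coeff_prod[of "\<lambda>y. [:-y, 1:]" "T - {x}"] by (simp add: b_def)
  have "poly L z = poly f z" if z: "z \<in> T" for z
  proof -
    have "poly L z = (\<Sum>x\<in>T. poly f x / d x * (\<Prod>y\<in>T-{x}. z - y))"
      unfolding L_def b_def by (simp add: poly_sum poly_prod)
    also have "\<dots> = poly f z / d z * d z"
      using T z by (subst sum.remove[of _ z]) (auto simp: d_def intro!: sum.neutral)
    also have "\<dots> = poly f z" using T by (simp add: d_def prod_zero_iff)
    finally show ?thesis .
  qed
  moreover have "degree L < card T"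
  proof -
    have "degree L \<le> card T - 1"
      unfolding L_def using deg_b by (intro degree_sum_le T) (auto intro: order.trans[OF degree_smult_le])
    then show ?thesis using deg by linarith
  qed
  ultimately have "f = L" using deg by (intro poly_eqI_degree[of T]) auto
  then have "coeff f (card T - 1) = coeff L (card T - 1)" by simp
  also have "\<dots> = (\<Sum>x\<in>T. poly f x / d x * coeff (b x) (card T - 1))"
    by (simp add: L_def coeff_sum)
  also have "\<dots> = (\<Sum>x\<in>T. poly f x / d x)" using lead_b by (intro sum.cong) simp_all
  finally show ?thesis by (simp add: d_def)
qed

lemma prod_image_remove:
  assumes "inj_on t I" "i \<in> I"
  shows "(\<Prod>y\<in>t ` I - {t i}. g y) = (\<Prod>k\<in>I-{i}. g (t k))"
proof -
  have "t ` I - {t i} = t ` (I - {i})" using assms by (auto simp: inj_on_def)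
  moreover have "inj_on t (I - {i})" using assms by (auto simp: inj_on_def)
  ultimately show ?thesis by (simp add: prod.reindex)
qed

lemma lagrange_leading_coeff_indexed:
  fixes f :: "'a::field poly"
  assumes I: "finite I" and inj: "inj_on t I" and deg: "degree f < card I"
  shows "(\<Sum>i\<in>I. poly f (t i) / (\<Prod>k\<in>I-{i}. t i - t k)) = coeff f (card I - 1)"
  using lagrange_leading_coeff[of "t ` I" f] I deg
  by (simp add: card_image[OF inj] sum.reindex[OF inj] prod_image_remove[OF inj])

definition monic_root_sum :: "'a::comm_ring_1 poly \<Rightarrow> nat \<Rightarrow> 'a \<Rightarrow> bool" where
  "monic_root_sum p d s \<longleftrightarrow> degree p = d \<and> coeff p d = 1 \<and> (if d = 0 then s = 0 else coeff p (d - 1) = - s)"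

lemma monic_root_sum_linear_mult:
  fixes p :: "'a::idom poly"
  assumes "monic_root_sum p d s"
  shows "monic_root_sum ([:-a, 1:] * p) (d + 1) (s + a)"
proof -
  have p: "p \<noteq> 0" using assms by (auto simp: monic_root_sum_def)
  have eq: "[:-a, 1:] * p = smult (-a) p + pCons 0 p" by (simp add: mult_pCons_left)
  have "degree ([:-a, 1:] * p) = d + 1"
    using p assms by (subst degree_mult_eq) (auto simp: monic_root_sum_def)
  moreover have "coeff ([:-a, 1:] * p) (d + 1) = 1"
    unfolding eq using assms by (simp add: monic_root_sum_def coeff_eq_0)
  moreover have "coeff ([:-a, 1:] * p) d = - (s + a)"
    unfolding eq using assms by (cases d) (auto simp: monic_root_sum_def)
  ultimately show ?thesis by (simp add: monic_root_sum_def)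
qed

lemma monic_root_sum_prod:
  fixes r :: "'b \<Rightarrow> 'a::idom"
  assumes "finite K"
  shows "monic_root_sum (\<Prod>k\<in>K. [:-r k, 1:]) (card K) (\<Sum>k\<in>K. r k)"
  using assms
proof (induction K rule: finite_induct)
  case empty
  then show ?case by (simp add: monic_root_sum_def)
next
  case (insert k K)
  then show ?case using monic_root_sum_linear_mult[OF insert.IH, of "r k"] by (simp add: add.commute)
qed

lemma lagrange_sum_monic_deg_less:
  fixes f :: "'a::field poly"
  assumes "finite I" "inj_on t I" "monic_root_sum f d s" "d + 1 = card I"
  shows "(\<Sum>i\<in>I. poly f (t i) / (\<Prod>k\<in>I-{i}. t i - t k)) = 1"
  using lagrange_leading_coeff_indexed[OF assms(1,2), of f] assms(3,4)
  by (simp add: monic_root_sum_def flip: assms(4))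

lemma lagrange_sum_monic_deg_eq:
  fixes f :: "'a::field poly"
  assumes I: "finite I" "I \<noteq> {}" and inj: "inj_on t I" and f: "monic_root_sum f (card I) s"
  shows "(\<Sum>i\<in>I. poly f (t i) / (\<Prod>k\<in>I-{i}. t i - t k)) = (\<Sum>i\<in>I. t i) - s"
proof -
  let ?n = "card I"
  have n: "?n \<noteq> 0" using I by simp
  define w where "w = (\<Prod>k\<in>I. [:-t k, 1:])"
  have w: "monic_root_sum w ?n (\<Sum>k\<in>I. t k)" unfolding w_def by (rule monic_root_sum_prod[OF I(1)])
  have "degree (f - w) \<le> ?n" using f w degree_diff_le_max[of f w] by (simp add: monic_root_sum_def)
  moreover have "coeff (f - w) ?n = 0" using f w by (simp add: monic_root_sum_def)
  ultimately have "degree (f - w) < ?n" using n by (metis antisym_conv2 leading_coeff_0_iff degree_0)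
  then have "(\<Sum>i\<in>I. poly (f - w) (t i) / (\<Prod>k\<in>I-{i}. t i - t k)) = coeff (f - w) (?n - 1)"
    by (rule lagrange_leading_coeff_indexed[OF I(1) inj])
  moreover have "coeff (f - w) (?n - 1) = (\<Sum>i\<in>I. t i) - s"
    using f w n by (simp add: monic_root_sum_def)
  moreover have "poly w (t i) = 0" if "i \<in> I" for i
    unfolding w_def poly_prod using I that by (subst prod_zero_iff) auto
  ultimately show ?thesis by (simp cong: sum.cong_simp)
qed

lemma lagrange_sum_monic_extra_node:
  fixes f :: "'a::field poly"
  assumes I: "finite I" and inj: "inj_on t I" and z: "z \<notin> t ` I" and f: "monic_root_sum f (card I) s"
  shows "(\<Sum>i\<in>I. poly f (t i) / ((t i - z) * (\<Prod>k\<in>I-{i}. t i - t k))) =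
    1 - poly f z / (\<Prod>k\<in>I. z - t k)"
proof -
  let ?T = "insert z (t ` I)"
  have card_T: "card ?T = card I + 1" using z I card_image[OF inj] by simp
  have "1 = (\<Sum>x\<in>?T. poly f x / (\<Prod>y\<in>?T-{x}. x - y))"
    using lagrange_leading_coeff[of ?T f] I f card_T by (simp add: monic_root_sum_def)
  also have "\<dots> = poly f z / (\<Prod>y\<in>t ` I. z - y) + (\<Sum>i\<in>I. poly f (t i) / (\<Prod>y\<in>?T-{t i}. t i - y))"
    using z I by (simp add: sum.reindex[OF inj])
  also have "(\<Prod>y\<in>t ` I. z - y) = (\<Prod>k\<in>I. z - t k)" by (simp add: prod.reindex[OF inj])
  also have "(\<Sum>i\<in>I. poly f (t i) / (\<Prod>y\<in>?T-{t i}. t i - y)) =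
      (\<Sum>i\<in>I. poly f (t i) / ((t i - z) * (\<Prod>k\<in>I-{i}. t i - t k)))"
  proof (intro sum.cong refl)
    fix i assume i: "i \<in> I"
    have "?T - {t i} = insert z (t ` I - {t i})" using z i by auto
    then show "poly f (t i) / (\<Prod>y\<in>?T-{t i}. t i - y) = poly f (t i) / ((t i - z) * (\<Prod>k\<in>I-{i}. t i - t k))"
      using I z by (simp add: prod_image_remove[OF inj i])
  qed
  finally show ?thesis by (simp add: algebra_simps)
qed

section \<open>The even family\<close>

lemma quadratic_expression_comm:
  fixes A :: "nat \<Rightarrow> nat \<Rightarrow> 'a::comm_ring_1" and n :: nat and c e :: 'a
  defines "Q r s \<equiv> (\<Sum>k<n. A r k * A k s) - c * A r s + (if r = s then e else 0)"
  assumes r: "r < n" and s: "s < n"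
  shows "(\<Sum>k<n. A r k * Q k s) = (\<Sum>k<n. Q r k * A k s)"
proof -
  let ?AAA = "\<lambda>r k l s. A r k * A k l * A l s"
  have "(\<Sum>k<n. A r k * Q k s) =
      (\<Sum>k<n. (\<Sum>l<n. ?AAA r k l s) - c * (A r k * A k s) + (if k = s then e * A r s else 0))"
    unfolding Q_def by (intro sum.cong refl) (auto simp: algebra_simps sum_distrib_left)
  also have "\<dots> = (\<Sum>k<n. \<Sum>l<n. ?AAA r k l s) - c * (\<Sum>k<n. A r k * A k s) + e * A r s"
    using s by (simp add: sum.distrib sum_subtractf sum_distrib_left)
  also have "(\<Sum>k<n. \<Sum>l<n. ?AAA r k l s) = (\<Sum>k<n. \<Sum>l<n. ?AAA r l k s)"
    by (rule sum.swap)
  also have "(\<Sum>k<n. \<Sum>l<n. ?AAA r l k s) - c * (\<Sum>k<n. A r k * A k s) + e * A r s =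
      (\<Sum>k<n. (\<Sum>l<n. A r l * A l k) * A k s - c * (A r k * A k s) + (if k = r then e * A r s else 0))"
    using r by (simp add: sum.distrib sum_subtractf sum_distrib_left sum_distrib_right)
  also have "\<dots> = (\<Sum>k<n. Q r k * A k s)"
    unfolding Q_def by (intro sum.cong refl) (auto simp: ring_distribs mult.assoc)
  finally show ?thesis .
qed

text \<open>An abstract version of B + C in which the corner entry d and the diagonal entries X i, Y j
  are free parameters: rowI, rowJ form the first row, colI, colJ the first column, and W, Z the
  off-diagonal blocks between I and J.\<close>

locale even_family_entries =
  fixes m :: nat and a1 a2 d :: complex and X Y :: "nat \<Rightarrow> complex"
begin

definition q :: "nat \<Rightarrow> nat \<Rightarrow> complex" where
  "q i j = X i + Y j - (a1 + a2)"

definition rowI :: "nat \<Rightarrow> complex" where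
  "rowI i = (-1)^(m+1-i) * (\<Prod>l\<in>{1..m-i}. q i l) / (\<Prod>k\<in>{i+1..m-1}. X k - X i)"

definition colI :: "nat \<Rightarrow> complex" where
  "colI i = - (\<Prod>l\<in>{m+1-i..m}. q i l) / (\<Prod>k\<in>{1..i-1}. X i - X k)"

definition rowJ :: "nat \<Rightarrow> complex" where
  "rowJ j = (-1)^(m-j) * (Y j - a1) * (\<Prod>k\<in>{1..m-j}. q k j) / (\<Prod>l\<in>{j+1..m}. Y l - Y j)"

definition colJ :: "nat \<Rightarrow> complex" where
  "colJ j = - (Y j - a2) * (\<Prod>k\<in>{m+1-j..m-1}. q k j) / (\<Prod>l\<in>{1..j-1}. Y j - Y l)"

definition W :: "nat \<Rightarrow> nat \<Rightarrow> complex" where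
  "W i j = (-1)^(m-j) * (Y j - a1) * (\<Prod>l\<in>{m+1-i..m}-{j}. q i l) * (\<Prod>k\<in>{1..m-j}-{i}. q k j)
     / ((\<Prod>k\<in>{1..i-1}. X i - X k) * (\<Prod>l\<in>{j+1..m}. Y l - Y j))"

definition Z :: "nat \<Rightarrow> nat \<Rightarrow> complex" where
  "Z j i = (-1)^(m+1-i) * (Y j - a2) * (\<Prod>k\<in>{m+1-j..m-1}-{i}. q k j) * (\<Prod>l\<in>{1..m-i}-{j}. q i l)
     / ((\<Prod>l\<in>{1..j-1}. Y j - Y l) * (\<Prod>k\<in>{i+1..m-1}. X k - X i))"

text \<open>Positions are 0-based: the paper's index 1 is position 0 and I-index i is position i.\<close>

definition pos_J :: "nat \<Rightarrow> nat" where
  "pos_J j = m - 1 + j"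

definition entry :: "nat \<Rightarrow> nat \<Rightarrow> complex" where
  "entry r s =
    (if r = 0 then (if s = 0 then d else if s < m then rowI s else rowJ (s + 1 - m))
     else if r < m then (if s = 0 then colI r else if s < m then (if r = s then X r else 0) else W r (s + 1 - m))
     else (if s = 0 then colJ (r + 1 - m) else if s < m then Z (r + 1 - m) s
       else (if r = s then Y (r + 1 - m) else 0)))"

definition quad :: "nat \<Rightarrow> nat \<Rightarrow> complex" where
  "quad r s = (\<Sum>k<2*m. entry r k * entry k s) - (a1 + a2) * entry r s + (if r = s then a1 * a2 else 0)"

definition family_mat :: "complex mat" where
  "family_mat = mat (2*m) (2*m) (\<lambda>(r,s). entry r s)"

end

locale even_family = even_family_entries +
  assumes m: "m \<ge> 2" and inj_X: "inj_on X {1..m-1}" and inj_Y: "inj_on Y {1..m}"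
    and trace: "d + (\<Sum>i\<in>{1..m-1}. X i) + (\<Sum>j\<in>{1..m}. Y j) = of_nat m * (a1 + a2)"
begin

abbreviation DX :: "nat \<Rightarrow> complex" where
  "DX i \<equiv> \<Prod>k\<in>{1..m-1}-{i}. X i - X k"

abbreviation DY :: "nat \<Rightarrow> complex" where
  "DY j \<equiv> \<Prod>l\<in>{1..m}-{j}. Y j - Y l"

lemma prod_X_diff_nonzero:
  assumes "i \<in> {1..m-1}" and "K \<subseteq> {1..m-1} - {i}"
  shows "(\<Prod>k\<in>K. X i - X k) \<noteq> 0" and "(\<Prod>k\<in>K. X k - X i) \<noteq> 0"
proof -
  have "X i \<noteq> X k" "X k \<noteq> X i" if "k \<in> K" for k
    using inj_onD[OF inj_X, of i k] assms that by auto
  moreover have "finite K" using assms(2) finite_subset by blast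
  ultimately show "(\<Prod>k\<in>K. X i - X k) \<noteq> 0" "(\<Prod>k\<in>K. X k - X i) \<noteq> 0" by auto
qed

lemma prod_Y_diff_nonzero:
  assumes "j \<in> {1..m}" and "L \<subseteq> {1..m} - {j}"
  shows "(\<Prod>l\<in>L. Y j - Y l) \<noteq> 0" and "(\<Prod>l\<in>L. Y l - Y j) \<noteq> 0"
proof -
  have "Y j \<noteq> Y l" "Y l \<noteq> Y j" if "l \<in> L" for l
    using inj_onD[OF inj_Y, of j l] assms that by auto
  moreover have "finite L" using assms(2) finite_subset by blast
  ultimately show "(\<Prod>l\<in>L. Y j - Y l) \<noteq> 0" "(\<Prod>l\<in>L. Y l - Y j) \<noteq> 0" by auto
qed

lemma colI_mult_rowI:
  assumes i: "i \<in> {1..m-1}"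
  shows "colI i * rowI i = - (\<Prod>l\<in>{1..m}. q i l) / DX i"
proof -
  have "{1..m} = {1..m-i} \<union> {m+1-i..m}" "{1..m-1} - {i} = {1..i-1} \<union> {i+1..m-1}" using i by auto
  then have num: "(\<Prod>l\<in>{m+1-i..m}. q i l) * (\<Prod>l\<in>{1..m-i}. q i l) = (\<Prod>l\<in>{1..m}. q i l)"
    and den: "(\<Prod>k\<in>{1..i-1}. X i - X k) * (\<Prod>k\<in>{i+1..m-1}. X i - X k) = DX i"
    by (simp_all add: prod.union_disjoint mult.commute)
  have swap: "(\<Prod>k\<in>{i+1..m-1}. X k - X i) = (-1)^(m-1-i) * (\<Prod>k\<in>{i+1..m-1}. X i - X k)"
    by (subst prod_diff_swap) simp
  have "m + 1 - i = (m - 1 - i) + 2" using i by auto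
  then have sign: "(-1::complex)^(m+1-i) = (-1)^(m-1-i)" by (simp add: power_add)
  have "(\<Prod>k\<in>{1..i-1}. X i - X k) \<noteq> 0" "(\<Prod>k\<in>{i+1..m-1}. X i - X k) \<noteq> 0"
    using i by (rule prod_X_diff_nonzero(1); auto)+
  then show ?thesis
    unfolding colI_def rowI_def swap sign num[symmetric] den[symmetric] by (simp add: field_simps)
qed

lemma rowJ_mult_colJ:
  assumes j: "j \<in> {1..m}"
  shows "rowJ j * colJ j = - (Y j - a1) * (Y j - a2) * (\<Prod>k\<in>{1..m-1}. q k j) / DY j"
proof -
  have "{1..m-1} = {1..m-j} \<union> {m+1-j..m-1}" "{1..m} - {j} = {j+1..m} \<union> {1..j-1}" using j by auto
  then have num: "(\<Prod>k\<in>{1..m-j}. q k j) * (\<Prod>k\<in>{m+1-j..m-1}. q k j) = (\<Prod>k\<in>{1..m-1}. q k j)"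
    and den: "(\<Prod>l\<in>{j+1..m}. Y j - Y l) * (\<Prod>l\<in>{1..j-1}. Y j - Y l) = DY j"
    by (simp_all add: prod.union_disjoint)
  have swap: "(\<Prod>l\<in>{j+1..m}. Y l - Y j) = (-1)^(m-j) * (\<Prod>l\<in>{j+1..m}. Y j - Y l)"
    by (subst prod_diff_swap) simp
  have sign: "((-1::complex)^(m-j))^2 = 1" by (simp flip: power_mult power_mult_distrib)
  have "(\<Prod>l\<in>{j+1..m}. Y j - Y l) \<noteq> 0" "(\<Prod>l\<in>{1..j-1}. Y j - Y l) \<noteq> 0"
    using j by (rule prod_Y_diff_nonzero(1); auto)+
  then show ?thesis
    unfolding rowJ_def colJ_def swap num[symmetric] den[symmetric] using sign
    by (simp add: field_simps power2_eq_square)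
qed

lemma W_mult_q:
  assumes i: "i \<in> {1..m-1}" and j: "j \<in> {1..m}"
  shows "W i j * q i j = - (colI i * rowJ j)"
proof -
  \<comment> \<open>The factor q i j is missing from exactly one of the two products in W i j.\<close>
  have key: "(\<Prod>l\<in>{m+1-i..m}-{j}. q i l) * (\<Prod>k\<in>{1..m-j}-{i}. q k j) * q i j
     = (\<Prod>l\<in>{m+1-i..m}. q i l) * (\<Prod>k\<in>{1..m-j}. q k j)"
  proof (cases "m + 1 - i \<le> j")
    case True
    then have "j \<in> {m+1-i..m}" "i \<notin> {1..m-j}" using i j by auto
    then show ?thesis by (simp add: prod.remove[of _ j] algebra_simps)
  next
    case False
    then have "j \<notin> {m+1-i..m}" "i \<in> {1..m-j}" using i j by auto
    then show ?thesis by (simp add: prod.remove[of _ i] algebra_simps)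
  qed
  have "(\<Prod>k\<in>{1..i-1}. X i - X k) \<noteq> 0" using i by (intro prod_X_diff_nonzero(1)[OF i]) auto
  moreover have "(\<Prod>l\<in>{j+1..m}. Y l - Y j) \<noteq> 0" by (intro prod_Y_diff_nonzero(2)[OF j]) auto
  ultimately show ?thesis unfolding W_def colI_def rowJ_def using key by (simp add: field_simps)
qed

lemma Z_mult_q:
  assumes i: "i \<in> {1..m-1}" and j: "j \<in> {1..m}"
  shows "Z j i * q i j = - (colJ j * rowI i)"
proof -
  have key: "(\<Prod>k\<in>{m+1-j..m-1}-{i}. q k j) * (\<Prod>l\<in>{1..m-i}-{j}. q i l) * q i j
     = (\<Prod>k\<in>{m+1-j..m-1}. q k j) * (\<Prod>l\<in>{1..m-i}. q i l)"
  proof (cases "m + 1 - j \<le> i")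
    case True
    then have "i \<in> {m+1-j..m-1}" "j \<notin> {1..m-i}" using i j by auto
    then show ?thesis by (simp add: prod.remove[of _ i] algebra_simps)
  next
    case False
    then have "i \<notin> {m+1-j..m-1}" "j \<in> {1..m-i}" using i j by auto
    then show ?thesis by (simp add: prod.remove[of _ j] algebra_simps)
  qed
  let ?D = "(\<Prod>l\<in>{1..j-1}. Y j - Y l) * (\<Prod>k\<in>{i+1..m-1}. X k - X i)"
  have "Z j i * q i j = (-1)^(m+1-i) * (Y j - a2)
      * ((\<Prod>k\<in>{m+1-j..m-1}-{i}. q k j) * (\<Prod>l\<in>{1..m-i}-{j}. q i l) * q i j) / ?D"
    unfolding Z_def by (simp add: mult_ac)
  also have "\<dots> = - (colJ j * rowI i)"
    unfolding key colJ_def rowI_def by (simp add: mult_ac del: minus_diff_eq)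
  finally show ?thesis .
qed

lemma entry_00: "entry 0 0 = d"
  and entry_0I: "i \<in> {1..m-1} \<Longrightarrow> entry 0 i = rowI i"
  and entry_0J: "j \<in> {1..m} \<Longrightarrow> entry 0 (pos_J j) = rowJ j"
  and entry_I0: "i \<in> {1..m-1} \<Longrightarrow> entry i 0 = colI i"
  and entry_II: "i \<in> {1..m-1} \<Longrightarrow> i' \<in> {1..m-1} \<Longrightarrow> entry i i' = (if i = i' then X i else 0)"
  and entry_IJ: "i \<in> {1..m-1} \<Longrightarrow> j \<in> {1..m} \<Longrightarrow> entry i (pos_J j) = W i j"
  and entry_J0: "j \<in> {1..m} \<Longrightarrow> entry (pos_J j) 0 = colJ j"
  and entry_JI: "j \<in> {1..m} \<Longrightarrow> i \<in> {1..m-1} \<Longrightarrow> entry (pos_J j) i = Z j i"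
  and entry_JJ: "j \<in> {1..m} \<Longrightarrow> j' \<in> {1..m} \<Longrightarrow> entry (pos_J j) (pos_J j') = (if j = j' then Y j else 0)"
  by (auto simp: entry_def pos_J_def)

lemmas entry_simps = entry_00 entry_0I entry_0J entry_I0 entry_II entry_IJ entry_J0 entry_JI entry_JJ

lemma positions_cases:
  assumes "r < 2*m"
  obtains "r = 0" | "r \<in> {1..m-1}" | j where "j \<in> {1..m}" "r = pos_J j"
proof -
  consider "r = 0" | "r \<in> {1..m-1}" | "r \<ge> m" by force
  then show ?thesis
  proof cases
    case 3
    then have "r + 1 - m \<in> {1..m}" "r = pos_J (r + 1 - m)" using assms by (auto simp: pos_J_def)
    then show ?thesis using that by blast
  qed (use that in auto)
qed

lemma sum_positions: "(\<Sum>k<2*m. f k) = f 0 + (\<Sum>i\<in>{1..m-1}. f i) + (\<Sum>j\<in>{1..m}. f (pos_J j))"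
proof -
  have eq: "{..<2*m} = insert 0 ({1..m-1} \<union> {m..<2*m})" using m by auto
  have "(\<Sum>k<2*m. f k) = f 0 + ((\<Sum>i\<in>{1..m-1}. f i) + (\<Sum>k\<in>{m..<2*m}. f k))"
    unfolding eq by (subst sum.insert) (auto, subst sum.union_disjoint, auto)
  also have "(\<Sum>k\<in>{m..<2*m}. f k) = (\<Sum>j\<in>{1..m}. f (pos_J j))"
    by (rule sum.reindex_bij_witness[of _ pos_J "\<lambda>k. k + 1 - m"]) (use m in \<open>auto simp: pos_J_def\<close>)
  finally show ?thesis by (simp add: add.assoc)
qed

lemma quad_expand:
  "quad r s = entry r 0 * entry 0 s + (\<Sum>i\<in>{1..m-1}. entry r i * entry i s)
    + (\<Sum>j\<in>{1..m}. entry r (pos_J j) * entry (pos_J j) s) - (a1 + a2) * entry r s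
    + (if r = s then a1 * a2 else 0)"
  unfolding quad_def sum_positions by simp

lemma sum_I_row:
  assumes "i \<in> {1..m-1}"
  shows "(\<Sum>k\<in>{1..m-1}. entry i k * g k) = X i * g i"
proof -
  have "(\<Sum>k\<in>{1..m-1}. entry i k * g k) = (\<Sum>k\<in>{1..m-1}. if k = i then X i * g i else 0)"
    using assms by (intro sum.cong) (auto simp: entry_II)
  then show ?thesis using assms by simp
qed

lemma sum_I_col:
  assumes "i \<in> {1..m-1}"
  shows "(\<Sum>k\<in>{1..m-1}. g k * entry k i) = g i * X i"
proof -
  have "(\<Sum>k\<in>{1..m-1}. g k * entry k i) = (\<Sum>k\<in>{1..m-1}. if k = i then g i * X i else 0)"
    using assms by (intro sum.cong) (auto simp: entry_II)
  then show ?thesis using assms by simp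
qed

lemma sum_J_row:
  assumes "j \<in> {1..m}"
  shows "(\<Sum>l\<in>{1..m}. entry (pos_J j) (pos_J l) * g l) = Y j * g j"
proof -
  have "(\<Sum>l\<in>{1..m}. entry (pos_J j) (pos_J l) * g l) = (\<Sum>l\<in>{1..m}. if l = j then Y j * g j else 0)"
    using assms by (intro sum.cong) (auto simp: entry_JJ)
  then show ?thesis using assms by simp
qed

lemma sum_J_col:
  assumes "j \<in> {1..m}"
  shows "(\<Sum>l\<in>{1..m}. g l * entry (pos_J l) (pos_J j)) = g j * Y j"
proof -
  have "(\<Sum>l\<in>{1..m}. g l * entry (pos_J l) (pos_J j)) = (\<Sum>l\<in>{1..m}. if l = j then g j * Y j else 0)"
    using assms by (intro sum.cong) (auto simp: entry_JJ)
  then show ?thesis using assms by simp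
qed

lemma pos_J_neq_I: "j \<in> {1..m} \<Longrightarrow> i \<in> {1..m-1} \<Longrightarrow> pos_J j \<noteq> i"
  and pos_J_neq_0: "j \<in> {1..m} \<Longrightarrow> pos_J j \<noteq> 0"
  and pos_J_eq_iff: "pos_J j = pos_J j' \<longleftrightarrow> j = j'"
  unfolding pos_J_def using m by auto

lemma quad_IJ:
  assumes i: "i \<in> {1..m-1}" and j: "j \<in> {1..m}"
  shows "quad i (pos_J j) = 0"
proof -
  have "quad i (pos_J j) = colI i * rowJ j + W i j * q i j"
    unfolding quad_expand sum_I_row[OF i] sum_J_col[OF j] using i j pos_J_neq_I[OF j i]
    by (simp add: entry_simps q_def algebra_simps)
  then show ?thesis using W_mult_q[OF i j] by simp
qed

lemma quad_JI:
  assumes i: "i \<in> {1..m-1}" and j: "j \<in> {1..m}"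
  shows "quad (pos_J j) i = 0"
proof -
  have "quad (pos_J j) i = colJ j * rowI i + Z j i * q i j"
    unfolding quad_expand sum_I_col[OF i] sum_J_row[OF j] using i j pos_J_neq_I[OF j i]
    by (simp add: entry_simps q_def algebra_simps)
  then show ?thesis using Z_mult_q[OF i j] by simp
qed

end

locale even_family_generic = even_family +
  assumes q_nonzero: "i \<in> {1..m-1} \<Longrightarrow> j \<in> {1..m} \<Longrightarrow> q i j \<noteq> 0"
begin

lemma W_eq:
  assumes "i \<in> {1..m-1}" "j \<in> {1..m}"
  shows "W i j = - (colI i * rowJ j) / q i j"
  using W_mult_q[OF assms] q_nonzero[OF assms] by (simp add: field_simps)

lemma Z_eq:
  assumes "i \<in> {1..m-1}" "j \<in> {1..m}"
  shows "Z j i = - (colJ j * rowI i) / q i j"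
  using Z_mult_q[OF assms] q_nonzero[OF assms] by (simp add: field_simps)

definition fY :: "nat set \<Rightarrow> complex poly" where
  "fY K = [:-a1, 1:] * ([:-a2, 1:] * (\<Prod>k\<in>K. [:-(a1 + a2 - X k), 1:]))"

definition fX :: "nat set \<Rightarrow> complex poly" where
  "fX L = (\<Prod>l\<in>L. [:-(a1 + a2 - Y l), 1:])"

lemma poly_fY: "finite K \<Longrightarrow> poly (fY K) z = (z - a1) * (z - a2) * (\<Prod>k\<in>K. z - (a1 + a2 - X k))"
  by (simp add: fY_def poly_prod algebra_simps)

lemma poly_fX: "finite L \<Longrightarrow> poly (fX L) z = (\<Prod>l\<in>L. z - (a1 + a2 - Y l))"
  by (simp add: fX_def poly_prod algebra_simps)

lemma monic_root_sum_fY: "finite K \<Longrightarrow> monic_root_sum (fY K) (card K + 2) ((\<Sum>k\<in>K. a1 + a2 - X k) + a2 + a1)"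
  unfolding fY_def
  using monic_root_sum_linear_mult[OF monic_root_sum_linear_mult[OF monic_root_sum_prod[of K "\<lambda>k. a1 + a2 - X k"]]]
  by simp

lemma monic_root_sum_fX: "finite L \<Longrightarrow> monic_root_sum (fX L) (card L) (\<Sum>l\<in>L. a1 + a2 - Y l)"
  unfolding fX_def by (rule monic_root_sum_prod)

lemma rowJ_mult_colJ_split:
  assumes j: "j \<in> {1..m}" and R: "R \<subseteq> {1..m-1}"
  shows "rowJ j * colJ j = - poly (fY ({1..m-1} - R)) (Y j) * (\<Prod>k\<in>R. q k j) / DY j"
proof -
  have "(\<Prod>k\<in>{1..m-1}. q k j) = (\<Prod>k\<in>{1..m-1} - R. q k j) * (\<Prod>k\<in>R. q k j)"
    using R by (simp add: prod.subset_diff)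
  then show ?thesis unfolding rowJ_mult_colJ[OF j] by (simp add: poly_fY q_def algebra_simps)
qed

lemma colI_mult_rowI_split:
  assumes i: "i \<in> {1..m-1}" and R: "R \<subseteq> {1..m}"
  shows "colI i * rowI i = - poly (fX ({1..m} - R)) (X i) * (\<Prod>l\<in>R. q i l) / DX i"
proof -
  have "(\<Prod>l\<in>{1..m}. q i l) = (\<Prod>l\<in>{1..m} - R. q i l) * (\<Prod>l\<in>R. q i l)"
    using R by (simp add: prod.subset_diff)
  then show ?thesis unfolding colI_mult_rowI[OF i] by (simp add: poly_fX q_def algebra_simps)
qed

lemma sum_Y_eq: "(\<Sum>j\<in>{1..m}. Y j) = of_nat m * (a1 + a2) - d - (\<Sum>i\<in>{1..m-1}. X i)"
  using trace by (simp add: eq_diff_eq add_ac)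

lemma sum_J_div_q:
  assumes i: "i \<in> {1..m-1}"
  shows "(\<Sum>j\<in>{1..m}. rowJ j * colJ j / q i j) = d + X i - (a1 + a2)"
proof -
  let ?K = "{1..m-1} - {i}"
  have "(\<Sum>j\<in>{1..m}. rowJ j * colJ j / q i j) = - (\<Sum>j\<in>{1..m}. poly (fY ?K) (Y j) / DY j)"
    unfolding sum_negf[symmetric]
    using i q_nonzero by (intro sum.cong) (simp_all add: rowJ_mult_colJ_split[of _ "{i}"])
  also have "(\<Sum>j\<in>{1..m}. poly (fY ?K) (Y j) / DY j) = (\<Sum>j\<in>{1..m}. Y j) - ((\<Sum>k\<in>?K. a1 + a2 - X k) + a2 + a1)"
  proof (rule lagrange_sum_monic_deg_eq[OF _ _ inj_Y])
    have "card ?K + 2 = card {1..m}" using i m by auto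
    then show "monic_root_sum (fY ?K) (card {1..m}) ((\<Sum>k\<in>?K. a1 + a2 - X k) + a2 + a1)"
      using monic_root_sum_fY[of ?K] by simp
  qed (use m in auto)
  also have "(\<Sum>k\<in>?K. a1 + a2 - X k) = of_nat (m - 2) * (a1 + a2) - ((\<Sum>k\<in>{1..m-1}. X k) - X i)"
    using i by (simp add: sum_subtractf sum.remove numeral_2_eq_2)
  finally show ?thesis unfolding sum_Y_eq using m by (simp add: of_nat_diff algebra_simps)
qed

lemma sum_J_div_q_q:
  assumes i: "i \<in> {1..m-1}" and i': "i' \<in> {1..m-1}" and "i \<noteq> i'"
  shows "(\<Sum>j\<in>{1..m}. rowJ j * colJ j / (q i j * q i' j)) = -1"
proof -
  let ?K = "{1..m-1} - {i, i'}"
  have "(\<Sum>j\<in>{1..m}. rowJ j * colJ j / (q i j * q i' j)) = - (\<Sum>j\<in>{1..m}. poly (fY ?K) (Y j) / DY j)"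
    unfolding sum_negf[symmetric] using assms q_nonzero
    by (intro sum.cong) (simp_all add: rowJ_mult_colJ_split[of _ "{i, i'}"])
  also have "(\<Sum>j\<in>{1..m}. poly (fY ?K) (Y j) / DY j) = 1"
    using assms monic_root_sum_fY[of ?K] by (intro lagrange_sum_monic_deg_less inj_Y) (auto simp: card_Diff_subset)
  finally show ?thesis .
qed

lemma sum_J_div_q_sq:
  assumes i: "i \<in> {1..m-1}"
  shows "(\<Sum>j\<in>{1..m}. rowJ j * colJ j / (q i j)^2) = -1 + (X i - a1) * (X i - a2) * DX i / (\<Prod>l\<in>{1..m}. q i l)"
proof -
  let ?K = "{1..m-1} - {i}" and ?z = "a1 + a2 - X i"
  have "(\<Sum>j\<in>{1..m}. rowJ j * colJ j / (q i j)^2)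
      = - (\<Sum>j\<in>{1..m}. poly (fY ?K) (Y j) / ((Y j - ?z) * DY j))"
    unfolding sum_negf[symmetric] using i q_nonzero
    by (intro sum.cong) (simp_all add: rowJ_mult_colJ_split[of _ "{i}"] power2_eq_square q_def)
  also have "(\<Sum>j\<in>{1..m}. poly (fY ?K) (Y j) / ((Y j - ?z) * DY j))
      = 1 - poly (fY ?K) ?z / (\<Prod>l\<in>{1..m}. ?z - Y l)"
  proof (rule lagrange_sum_monic_extra_node[OF _ inj_Y])
    show "?z \<notin> Y ` {1..m}"
    proof
      assume "?z \<in> Y ` {1..m}"
      then obtain j where j: "j \<in> {1..m}" "Y j = ?z" by auto
      then have "q i j = 0" by (simp add: q_def)
      with q_nonzero[OF i j(1)] show False by simp
    qed
    have "card ?K + 2 = card {1..m}" using i m by auto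
    then show "monic_root_sum (fY ?K) (card {1..m}) ((\<Sum>k\<in>?K. a1 + a2 - X k) + a2 + a1)"
      using monic_root_sum_fY[of ?K] by simp
  qed simp
  also have "poly (fY ?K) ?z = (-1)^(m-2) * ((X i - a1) * (X i - a2) * DX i)"
    using i by (simp add: poly_fY prod_diff_swap[of X] numeral_2_eq_2 algebra_simps)
  also have "(\<Prod>l\<in>{1..m}. ?z - Y l) = (\<Prod>l\<in>{1..m}. - q i l)"
    by (simp add: q_def diff_diff_eq)
  also have "\<dots> = (-1)^m * (\<Prod>l\<in>{1..m}. q i l)"
    by (subst prod_uminus) simp
  also have "(-1::complex)^m = (-1)^(m-2)"
    using m by (metis le_add_diff_inverse2 power_add power_minus1_even mult.right_neutral)
  finally show ?thesis by simp
qed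

lemma sum_I_div_q:
  assumes j: "j \<in> {1..m}"
  shows "(\<Sum>i\<in>{1..m-1}. colI i * rowI i / q i j) = d + Y j - (a1 + a2)"
proof -
  let ?L = "{1..m} - {j}"
  have "(\<Sum>i\<in>{1..m-1}. colI i * rowI i / q i j) = - (\<Sum>i\<in>{1..m-1}. poly (fX ?L) (X i) / DX i)"
    unfolding sum_negf[symmetric]
    using j q_nonzero by (intro sum.cong) (simp_all add: colI_mult_rowI_split[of _ "{j}"])
  also have "(\<Sum>i\<in>{1..m-1}. poly (fX ?L) (X i) / DX i) = (\<Sum>i\<in>{1..m-1}. X i) - (\<Sum>l\<in>?L. a1 + a2 - Y l)"
  proof (rule lagrange_sum_monic_deg_eq[OF _ _ inj_X])
    have "card ?L = card {1..m-1}" using j m by auto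
    then show "monic_root_sum (fX ?L) (card {1..m-1}) (\<Sum>l\<in>?L. a1 + a2 - Y l)"
      using monic_root_sum_fX[of ?L] by simp
  qed (use m in auto)
  also have "(\<Sum>l\<in>?L. a1 + a2 - Y l) = of_nat (m - 1) * (a1 + a2) - ((\<Sum>l\<in>{1..m}. Y l) - Y j)"
    using j by (simp add: sum_subtractf sum.remove)
  finally show ?thesis unfolding sum_Y_eq using m by (simp add: of_nat_diff algebra_simps)
qed

lemma sum_I_div_q_q:
  assumes j: "j \<in> {1..m}" and j': "j' \<in> {1..m}" and "j \<noteq> j'"
  shows "(\<Sum>i\<in>{1..m-1}. colI i * rowI i / (q i j * q i j')) = -1"
proof -
  let ?L = "{1..m} - {j, j'}"
  have "(\<Sum>i\<in>{1..m-1}. colI i * rowI i / (q i j * q i j')) = - (\<Sum>i\<in>{1..m-1}. poly (fX ?L) (X i) / DX i)"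
    unfolding sum_negf[symmetric] using assms q_nonzero
    by (intro sum.cong) (simp_all add: colI_mult_rowI_split[of _ "{j, j'}"])
  also have "(\<Sum>i\<in>{1..m-1}. poly (fX ?L) (X i) / DX i) = 1"
    using assms m monic_root_sum_fX[of ?L]
    by (intro lagrange_sum_monic_deg_less inj_X) (auto simp: card_Diff_subset)
  finally show ?thesis .
qed

lemma sum_I_div_q_sq:
  assumes j: "j \<in> {1..m}"
  shows "(\<Sum>i\<in>{1..m-1}. colI i * rowI i / (q i j)^2) = -1 + DY j / (\<Prod>k\<in>{1..m-1}. q k j)"
proof -
  let ?L = "{1..m} - {j}" and ?z = "a1 + a2 - Y j"
  have "(\<Sum>i\<in>{1..m-1}. colI i * rowI i / (q i j)^2)
      = - (\<Sum>i\<in>{1..m-1}. poly (fX ?L) (X i) / ((X i - ?z) * DX i))"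
    unfolding sum_negf[symmetric] using j q_nonzero
    by (intro sum.cong) (simp_all add: colI_mult_rowI_split[of _ "{j}"] power2_eq_square q_def)
  also have "(\<Sum>i\<in>{1..m-1}. poly (fX ?L) (X i) / ((X i - ?z) * DX i))
      = 1 - poly (fX ?L) ?z / (\<Prod>k\<in>{1..m-1}. ?z - X k)"
  proof (rule lagrange_sum_monic_extra_node[OF _ inj_X])
    show "?z \<notin> X ` {1..m-1}"
    proof
      assume "?z \<in> X ` {1..m-1}"
      then obtain i where i: "i \<in> {1..m-1}" "X i = ?z" by auto
      then have "q i j = 0" by (simp add: q_def)
      with q_nonzero[OF i(1) j] show False by simp
    qed
    have "card ?L = card {1..m-1}" using j m by auto
    then show "monic_root_sum (fX ?L) (card {1..m-1}) (\<Sum>l\<in>?L. a1 + a2 - Y l)"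
      using monic_root_sum_fX[of ?L] by simp
  qed simp
  also have "poly (fX ?L) ?z = (-1)^(m-1) * DY j"
    using j by (simp add: poly_fX prod_diff_swap[of Y] algebra_simps)
  also have "(\<Prod>k\<in>{1..m-1}. ?z - X k) = (\<Prod>k\<in>{1..m-1}. - q k j)"
    by (simp add: q_def diff_diff_eq add.commute)
  also have "\<dots> = (-1)^(m-1) * (\<Prod>k\<in>{1..m-1}. q k j)"
    by (subst prod_uminus) simp
  finally show ?thesis by simp
qed

lemma quad_0I:
  assumes i: "i \<in> {1..m-1}"
  shows "quad 0 i = 0"
proof -
  have "(\<Sum>j\<in>{1..m}. entry 0 (pos_J j) * entry (pos_J j) i) = - rowI i * (\<Sum>j\<in>{1..m}. rowJ j * colJ j / q i j)"
    unfolding sum_distrib_left using i by (intro sum.cong) (simp_all add: entry_simps Z_eq mult_ac)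
  also have "\<dots> = - rowI i * (d + X i - (a1 + a2))" by (simp only: sum_J_div_q[OF i])
  finally have J: "(\<Sum>j\<in>{1..m}. entry 0 (pos_J j) * entry (pos_J j) i) = - rowI i * (d + X i - (a1 + a2))" .
  show ?thesis unfolding quad_expand sum_I_col[OF i] J using i by (simp add: entry_simps algebra_simps)
qed

lemma quad_I0:
  assumes i: "i \<in> {1..m-1}"
  shows "quad i 0 = 0"
proof -
  have "(\<Sum>j\<in>{1..m}. entry i (pos_J j) * entry (pos_J j) 0) = - colI i * (\<Sum>j\<in>{1..m}. rowJ j * colJ j / q i j)"
    unfolding sum_distrib_left using i by (intro sum.cong) (simp_all add: entry_simps W_eq mult_ac)
  also have "\<dots> = - colI i * (d + X i - (a1 + a2))" by (simp only: sum_J_div_q[OF i])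
  finally have J: "(\<Sum>j\<in>{1..m}. entry i (pos_J j) * entry (pos_J j) 0) = - colI i * (d + X i - (a1 + a2))" .
  show ?thesis unfolding quad_expand sum_I_row[OF i] J using i by (simp add: entry_simps algebra_simps)
qed

lemma quad_0J:
  assumes j: "j \<in> {1..m}"
  shows "quad 0 (pos_J j) = 0"
proof -
  have "(\<Sum>i\<in>{1..m-1}. entry 0 i * entry i (pos_J j)) = - rowJ j * (\<Sum>i\<in>{1..m-1}. colI i * rowI i / q i j)"
    unfolding sum_distrib_left using j by (intro sum.cong) (simp_all add: entry_simps W_eq mult_ac)
  also have "\<dots> = - rowJ j * (d + Y j - (a1 + a2))" by (simp only: sum_I_div_q[OF j])
  finally have I: "(\<Sum>i\<in>{1..m-1}. entry 0 i * entry i (pos_J j)) = - rowJ j * (d + Y j - (a1 + a2))" .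
  show ?thesis unfolding quad_expand sum_J_col[OF j] I using j pos_J_neq_0[OF j]
    by (simp add: entry_simps algebra_simps)
qed

lemma quad_J0:
  assumes j: "j \<in> {1..m}"
  shows "quad (pos_J j) 0 = 0"
proof -
  have "(\<Sum>i\<in>{1..m-1}. entry (pos_J j) i * entry i 0) = - colJ j * (\<Sum>i\<in>{1..m-1}. colI i * rowI i / q i j)"
    unfolding sum_distrib_left using j by (intro sum.cong) (simp_all add: entry_simps Z_eq mult_ac)
  also have "\<dots> = - colJ j * (d + Y j - (a1 + a2))" by (simp only: sum_I_div_q[OF j])
  finally have I: "(\<Sum>i\<in>{1..m-1}. entry (pos_J j) i * entry i 0) = - colJ j * (d + Y j - (a1 + a2))" .
  show ?thesis unfolding quad_expand sum_J_row[OF j] I using j pos_J_neq_0[OF j]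
    by (simp add: entry_simps algebra_simps)
qed

lemma quad_II:
  assumes i: "i \<in> {1..m-1}" and i': "i' \<in> {1..m-1}"
  shows "quad i i' = 0"
proof -
  let ?S = "\<Sum>j\<in>{1..m}. rowJ j * colJ j / (q i j * q i' j)"
  have "(\<Sum>j\<in>{1..m}. entry i (pos_J j) * entry (pos_J j) i') = colI i * rowI i' * ?S"
    unfolding sum_distrib_left using i i' q_nonzero
    by (intro sum.cong) (simp_all add: entry_simps W_eq Z_eq field_simps)
  then have quad: "quad i i' = colI i * rowI i' * (1 + ?S) + (if i = i' then X i * X i - (a1 + a2) * X i + a1 * a2 else 0)"
    unfolding quad_expand sum_I_row[OF i] using i i' by (simp add: entry_simps algebra_simps)
  show ?thesis
  proof (cases "i = i'")
    case True
    let ?P = "\<Prod>l\<in>{1..m}. q i l"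
    have nonzero: "?P \<noteq> 0" "DX i \<noteq> 0"
      using q_nonzero[OF i] prod_X_diff_nonzero(1)[OF i, of "{1..m-1} - {i}"] by auto
    have "colI i * rowI i' * (1 + ?S) = colI i * rowI i * ((X i - a1) * (X i - a2) * DX i / ?P)"
      using sum_J_div_q_sq[OF i] True by (simp add: power2_eq_square)
    also have "\<dots> = - ?P / DX i * ((X i - a1) * (X i - a2) * DX i / ?P)"
      by (simp only: colI_mult_rowI[OF i])
    also have "\<dots> = - (X i - a1) * (X i - a2)" using nonzero by (simp add: field_simps)
    finally show ?thesis unfolding quad using True by (simp add: algebra_simps)
  next
    case False
    then show ?thesis unfolding quad using sum_J_div_q_q[OF i i'] by simp
  qed
qed

lemma quad_JJ:
  assumes j: "j \<in> {1..m}" and j': "j' \<in> {1..m}"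
  shows "quad (pos_J j) (pos_J j') = 0"
proof -
  let ?S = "\<Sum>i\<in>{1..m-1}. colI i * rowI i / (q i j * q i j')"
  have "(\<Sum>i\<in>{1..m-1}. entry (pos_J j) i * entry i (pos_J j')) = colJ j * rowJ j' * ?S"
    unfolding sum_distrib_left using j j' q_nonzero
    by (intro sum.cong) (simp_all add: entry_simps W_eq Z_eq field_simps)
  then have quad: "quad (pos_J j) (pos_J j') = colJ j * rowJ j' * (1 + ?S)
      + (if j = j' then Y j * Y j - (a1 + a2) * Y j + a1 * a2 else 0)"
    unfolding quad_expand sum_J_row[OF j] using j j' by (simp add: entry_simps pos_J_eq_iff algebra_simps)
  show ?thesis
  proof (cases "j = j'")
    case True
    let ?P = "\<Prod>k\<in>{1..m-1}. q k j"
    have nonzero: "?P \<noteq> 0" "DY j \<noteq> 0"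
      using q_nonzero[OF _ j] prod_Y_diff_nonzero(1)[OF j, of "{1..m} - {j}"] by auto
    have "colJ j * rowJ j' * (1 + ?S) = rowJ j * colJ j * (DY j / ?P)"
      using sum_I_div_q_sq[OF j] True by (simp add: power2_eq_square mult.commute)
    also have "\<dots> = - (Y j - a1) * (Y j - a2) * ?P / DY j * (DY j / ?P)"
      by (simp only: rowJ_mult_colJ[OF j])
    also have "\<dots> = - (Y j - a1) * (Y j - a2)" using nonzero by (simp add: field_simps)
    finally show ?thesis unfolding quad using True by (simp add: algebra_simps)
  next
    case False
    then show ?thesis unfolding quad using sum_I_div_q_q[OF j j'] by simp
  qed
qed

lemma quad_eq_0_off_origin:
  assumes r: "r < 2*m" and s: "s < 2*m" and "r \<noteq> 0 \<or> s \<noteq> 0"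
  shows "quad r s = 0"
  using r
proof (cases rule: positions_cases)
  case 1
  from s show ?thesis
    by (cases rule: positions_cases) (use 1 assms(3) quad_0I quad_0J in auto)
next
  case 2
  from s show ?thesis
    by (cases rule: positions_cases) (use 2 quad_I0 quad_II quad_IJ in auto)
next
  case (3 j)
  from s show ?thesis
    by (cases rule: positions_cases) (use 3 quad_J0 quad_JI quad_JJ in auto)
qed

lemma quad_00: "quad 0 0 = 0"
proof -
  \<comment> \<open>The matrix commutes with its own quadratic expression; compare entry (1,0) of both products.\<close>
  have one: "1 \<in> {1..m-1}" and pos: "0 < 2*m" "1 < 2*m" using m by auto
  have "(\<Sum>k<2*m. entry 1 k * quad k 0) = entry 1 0 * quad 0 0"
    by (subst sum.remove[of _ 0]) (use pos m in \<open>auto intro!: sum.neutral quad_eq_0_off_origin\<close>)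
  moreover have "(\<Sum>k<2*m. quad 1 k * entry k 0) = 0"
    using m by (intro sum.neutral) (auto intro!: quad_eq_0_off_origin)
  ultimately have "entry 1 0 * quad 0 0 = 0"
    using quadratic_expression_comm[of 1 "2*m" 0 entry "a1 + a2" "a1 * a2"] pos by (simp add: quad_def)
  moreover have "entry 1 0 = - q 1 m" using one m by (simp add: entry_I0 colI_def)
  ultimately show ?thesis using q_nonzero[OF one] m by simp
qed

lemma quad_eq_0_generic:
  assumes "r < 2*m" and "s < 2*m"
  shows "quad r s = 0"
proof (cases "r = 0 \<and> s = 0")
  case True
  then show ?thesis using quad_00 by simp
next
  case False
  then show ?thesis using quad_eq_0_off_origin[OF assms] by simp
qed

end

lemma isCont_divide_const: "isCont f a \<Longrightarrow> isCont (\<lambda>x. f x / (c::'a::real_normed_field)) a"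
  by (simp add: divide_inverse continuous_intros)

lemma isCont_if_const: "isCont f a \<Longrightarrow> isCont g a \<Longrightarrow> isCont (\<lambda>x. if P then f x else g x) a"
  by (cases P) auto

context even_family
begin

text \<open>Shifting all X i by t and d by -(m - 1) t preserves the hypotheses and the (t-free)
  denominators of the entries, so quad depends continuously on t, and for t \<noteq> 0 near 0 all
  q i j are nonzero.\<close>

lemma quad_eq_0:
  assumes r: "r < 2*m" and s: "s < 2*m"
  shows "quad r s = 0"
proof -
  define F where "F t = even_family_entries.quad m a1 a2 (d - of_nat (m - 1) * t) (\<lambda>i. X i + t) Y r s" for t
  have "F t = 0" if t: "\<forall>(i,j)\<in>{1..m-1} \<times> {1..m}. t \<noteq> a1 + a2 - X i - Y j" for t
  proof -
    have "even_family_generic m a1 a2 (d - of_nat (m - 1) * t) (\<lambda>i. X i + t) Y"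
    proof unfold_locales
      show "inj_on (\<lambda>i. X i + t) {1..m-1}" using inj_X by (auto simp: inj_on_def)
      show "d - of_nat (m - 1) * t + (\<Sum>i\<in>{1..m-1}. X i + t) + (\<Sum>j\<in>{1..m}. Y j) = of_nat m * (a1 + a2)"
        using trace by (simp add: sum.distrib)
      fix i j assume "i \<in> {1..m-1}" "j \<in> {1..m}"
      then have "t \<noteq> a1 + a2 - X i - Y j" using t by auto
      then show "even_family_entries.q a1 a2 (\<lambda>i. X i + t) Y i j \<noteq> 0"
        by (simp add: even_family_entries.q_def algebra_simps eq_diff_eq diff_eq_eq)
    qed (use m inj_Y in auto)
    then show ?thesis unfolding F_def by (rule even_family_generic.quad_eq_0_generic[OF _ r s])
  qed
  moreover have "eventually (\<lambda>t. \<forall>(i,j)\<in>{1..m-1} \<times> {1..m}. t \<noteq> a1 + a2 - X i - Y j) (at 0)"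
    by (intro eventually_ball_finite) (auto intro: eventually_neq_at_within)
  ultimately have "eventually (\<lambda>t. F t = 0) (at 0)" by (auto elim: eventually_mono)
  then have "(F \<longlongrightarrow> 0) (at 0)" by (rule tendsto_eventually)
  moreover have "isCont F 0"
    unfolding F_def even_family_entries.quad_def even_family_entries.entry_def even_family_entries.rowI_def
      even_family_entries.colI_def even_family_entries.rowJ_def even_family_entries.colJ_def
      even_family_entries.W_def even_family_entries.Z_def even_family_entries.q_def
    by (simp only: add_diff_cancel_right) (intro isCont_if_const isCont_divide_const continuous_intros)
  ultimately have "F 0 = 0" using tendsto_unique[of "at 0" F] by (simp add: isCont_def)
  then show ?thesis by (simp add: F_def)
qed

lemma family_mat_carrier: "family_mat \<in> carrier_mat (2*m) (2*m)"
  by (simp add: family_mat_def)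

lemma family_mat_annihilated: "char_matrix family_mat a1 * char_matrix family_mat a2 = 0\<^sub>m (2*m) (2*m)"
proof (rule eq_matI)
  fix r s assume "r < dim_row (0\<^sub>m (2*m) (2*m) :: complex mat)" "s < dim_col (0\<^sub>m (2*m) (2*m) :: complex mat)"
  then have r: "r < 2*m" and s: "s < 2*m" by auto
  have "(family_mat * family_mat) $$ (r,s) = (\<Sum>k<2*m. entry r k * entry k s)"
    using r s by (auto simp: family_mat_def scalar_prod_def atLeast0LessThan intro!: sum.cong)
  then show "(char_matrix family_mat a1 * char_matrix family_mat a2) $$ (r,s) = 0\<^sub>m (2*m) (2*m) $$ (r,s)"
    unfolding char_matrix_mult_index[OF family_mat_carrier r s] using quad_eq_0[OF r s] r s
    by (simp add: quad_def family_mat_def)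
qed (simp_all add: family_mat_def char_matrix_def)

lemma trace_family_mat: "trace_mat family_mat = of_nat m * (a1 + a2)"
proof -
  have "trace_mat family_mat = (\<Sum>k<2*m. entry k k)"
    by (simp add: trace_mat_def family_mat_def)
  also have "\<dots> = d + (\<Sum>i\<in>{1..m-1}. X i) + (\<Sum>j\<in>{1..m}. Y j)"
    unfolding sum_positions by (simp add: entry_simps cong: sum.cong_simp)
  finally show ?thesis using trace by simp
qed

end

section \<open>The matrices B and C\<close>

context
  fixes m :: nat and a1 a2 b1 b2 b3 :: complex and c :: "nat \<Rightarrow> complex"
  assumes m: "m \<ge> 2"
begin

interpretation E: even_family_entries m a1 a2 "b1 + c (2*m)" "\<lambda>i. b2 + c (2*m - i)" "\<lambda>j. b3 + c (m + 1 - j)" .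

abbreviation "entry_BC r s \<equiv> B_entry m a1 a2 b1 b2 b3 c r s + C_entry m a1 a2 b2 b3 c r s"

lemma entry_BC_00: "entry_BC 1 1 = b1 + c (2*m)"
  by (simp add: B_entry_def C_entry_def Let_def)

lemma entry_BC_0I:
  assumes i: "0 < i" "i < m"
  shows "entry_BC 1 (i+1) = E.rowI i"
proof -
  have "entry_BC 1 (i+1) = (-1)^(m+1-i) * (\<Prod>k\<in>{i+1..m}. qq a1 a2 b2 b3 c k (2*m-i))
      / (\<Prod>k\<in>{m+1..2*m-1-i}. c k - c (2*m-i))"
    using i m by (simp add: B_entry_def C_entry_def Let_def)
  also have "(\<Prod>k\<in>{i+1..m}. qq a1 a2 b2 b3 c k (2*m-i)) = (\<Prod>l\<in>{1..m-i}. E.q i l)"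
    by (rule prod.reindex_bij_witness[of _ "\<lambda>l. m+1-l" "\<lambda>k. m+1-k"])
      (use i in \<open>auto simp: qq_def even_family_entries.q_def algebra_simps\<close>)
  also have "(\<Prod>k\<in>{m+1..2*m-1-i}. c k - c (2*m-i)) = (\<Prod>k\<in>{i+1..m-1}. (b2 + c (2*m-k)) - (b2 + c (2*m-i)))"
    by (rule prod.reindex_bij_witness[of _ "\<lambda>l. 2*m-l" "\<lambda>k. 2*m-k"]) (use i in auto)
  finally show ?thesis by (simp add: even_family_entries.rowI_def)
qed

lemma entry_BC_0J:
  assumes j: "1 \<le> j" "j \<le> m"
  shows "entry_BC 1 (m+j) = E.rowJ j"
proof -
  have "entry_BC 1 (m+j) = (-1)^(m-j) * pp c b3 a1 (m+1-j) * (\<Prod>k\<in>{m+j..2*m-1}. qq a1 a2 b2 b3 c (m+1-j) k)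
      / (\<Prod>k\<in>{1..m-j}. c k - c (m+1-j))"
    using j m by (simp add: B_entry_def C_entry_def Let_def)
  also have "(\<Prod>k\<in>{m+j..2*m-1}. qq a1 a2 b2 b3 c (m+1-j) k) = (\<Prod>k\<in>{1..m-j}. E.q k j)"
    by (rule prod.reindex_bij_witness[of _ "\<lambda>l. 2*m-l" "\<lambda>k. 2*m-k"])
      (use j in \<open>auto simp: qq_def even_family_entries.q_def algebra_simps\<close>)
  also have "(\<Prod>k\<in>{1..m-j}. c k - c (m+1-j)) = (\<Prod>l\<in>{j+1..m}. (b3 + c (m+1-l)) - (b3 + c (m+1-j)))"
    by (rule prod.reindex_bij_witness[of _ "\<lambda>l. m+1-l" "\<lambda>k. m+1-k"]) (use j in auto)
  finally show ?thesis by (simp add: even_family_entries.rowJ_def pp_def algebra_simps)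
qed

lemma entry_BC_I0:
  assumes i: "0 < i" "i < m"
  shows "entry_BC (i+1) 1 = E.colI i"
proof -
  have "entry_BC (i+1) 1 = - (\<Prod>k\<in>{1..i}. qq a1 a2 b2 b3 c k (2*m-i)) / (\<Prod>k\<in>{2*m+1-i..2*m-1}. c (2*m-i) - c k)"
    using i m by (simp add: B_entry_def C_entry_def Let_def)
  also have "(\<Prod>k\<in>{1..i}. qq a1 a2 b2 b3 c k (2*m-i)) = (\<Prod>l\<in>{m+1-i..m}. E.q i l)"
    by (rule prod.reindex_bij_witness[of _ "\<lambda>l. m+1-l" "\<lambda>k. m+1-k"])
      (use i in \<open>auto simp: qq_def even_family_entries.q_def algebra_simps\<close>)
  also have "(\<Prod>k\<in>{2*m+1-i..2*m-1}. c (2*m-i) - c k) = (\<Prod>k\<in>{1..i-1}. (b2 + c (2*m-i)) - (b2 + c (2*m-k)))"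
    by (rule prod.reindex_bij_witness[of _ "\<lambda>l. 2*m-l" "\<lambda>k. 2*m-k"]) (use i in auto)
  finally show ?thesis by (simp add: even_family_entries.colI_def)
qed

lemma entry_BC_J0:
  assumes j: "1 \<le> j" "j \<le> m"
  shows "entry_BC (m+j) 1 = E.colJ j"
proof -
  have "entry_BC (m+j) 1 = - pp c b3 a2 (m+1-j) * (\<Prod>k\<in>{m+1..m-1+j}. qq a1 a2 b2 b3 c (m+1-j) k)
      / (\<Prod>k\<in>{m+2-j..m}. c (m+1-j) - c k)"
    using j m by (simp add: B_entry_def C_entry_def Let_def)
  also have "(\<Prod>k\<in>{m+1..m-1+j}. qq a1 a2 b2 b3 c (m+1-j) k) = (\<Prod>k\<in>{m+1-j..m-1}. E.q k j)"
    by (rule prod.reindex_bij_witness[of _ "\<lambda>l. 2*m-l" "\<lambda>k. 2*m-k"])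
      (use j in \<open>auto simp: qq_def even_family_entries.q_def algebra_simps\<close>)
  also have "(\<Prod>k\<in>{m+2-j..m}. c (m+1-j) - c k) = (\<Prod>l\<in>{1..j-1}. (b3 + c (m+1-j)) - (b3 + c (m+1-l)))"
    by (rule prod.reindex_bij_witness[of _ "\<lambda>l. m+1-l" "\<lambda>k. m+1-k"]) (use j in auto)
  finally show ?thesis by (simp add: even_family_entries.colJ_def pp_def algebra_simps)
qed

lemma entry_BC_II:
  assumes "0 < i" "i < m" "0 < i'" "i' < m"
  shows "entry_BC (i+1) (i'+1) = (if i = i' then b2 + c (2*m - i) else 0)"
  using assms by (auto simp: B_entry_def C_entry_def Let_def)

lemma entry_BC_JJ:
  assumes "m \<le> r" "r < 2*m" "m \<le> s" "s < 2*m"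
  shows "entry_BC (r+1) (s+1) = (if r = s then b3 + c (m + 1 - (r + 1 - m)) else 0)"
  using assms by (auto simp: B_entry_def C_entry_def Let_def)

lemma entry_BC_IJ:
  assumes i: "0 < i" "i < m" and j: "1 \<le> j" "j \<le> m"
  shows "entry_BC (i+1) (m+j) = E.W i j"
proof -
  have "entry_BC (i+1) (m+j) = (-1)^(m-j) * pp c b3 a1 (m+1-j)
      * (\<Prod>k\<in>{1..i} - {m+1-j}. qq a1 a2 b2 b3 c k (2*m-i)) * (\<Prod>k\<in>{m+j..2*m-1} - {2*m-i}. qq a1 a2 b2 b3 c (m+1-j) k)
      / ((\<Prod>k\<in>{2*m+1-i..2*m-1}. c (2*m-i) - c k) * (\<Prod>k\<in>{1..m-j}. c k - c (m+1-j)))"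
    using i j m by (simp add: B_entry_def C_entry_def Let_def)
  also have "(\<Prod>k\<in>{1..i} - {m+1-j}. qq a1 a2 b2 b3 c k (2*m-i)) = (\<Prod>l\<in>{m+1-i..m}-{j}. E.q i l)"
    by (rule prod.reindex_bij_witness[of _ "\<lambda>l. m+1-l" "\<lambda>k. m+1-k"])
      (use i j in \<open>auto simp: qq_def even_family_entries.q_def algebra_simps\<close>)
  also have "(\<Prod>k\<in>{m+j..2*m-1} - {2*m-i}. qq a1 a2 b2 b3 c (m+1-j) k) = (\<Prod>k\<in>{1..m-j}-{i}. E.q k j)"
    by (rule prod.reindex_bij_witness[of _ "\<lambda>l. 2*m-l" "\<lambda>k. 2*m-k"])
      (use i j in \<open>auto simp: qq_def even_family_entries.q_def algebra_simps\<close>)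
  also have "(\<Prod>k\<in>{2*m+1-i..2*m-1}. c (2*m-i) - c k) = (\<Prod>k\<in>{1..i-1}. (b2 + c (2*m-i)) - (b2 + c (2*m-k)))"
    by (rule prod.reindex_bij_witness[of _ "\<lambda>l. 2*m-l" "\<lambda>k. 2*m-k"]) (use i in auto)
  also have "(\<Prod>k\<in>{1..m-j}. c k - c (m+1-j)) = (\<Prod>l\<in>{j+1..m}. (b3 + c (m+1-l)) - (b3 + c (m+1-j)))"
    by (rule prod.reindex_bij_witness[of _ "\<lambda>l. m+1-l" "\<lambda>k. m+1-k"]) (use j in auto)
  finally show ?thesis by (simp add: even_family_entries.W_def pp_def algebra_simps)
qed

lemma entry_BC_JI:
  assumes i: "0 < i" "i < m" and j: "1 \<le> j" "j \<le> m"
  shows "entry_BC (m+j) (i+1) = E.Z j i"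
proof -
  have "entry_BC (m+j) (i+1) = (-1)^(m+1-i) * pp c b3 a2 (m+1-j)
      * (\<Prod>k\<in>{m+1..m-1+j} - {2*m-i}. qq a1 a2 b2 b3 c (m+1-j) k) * (\<Prod>k\<in>{i+1..m} - {m+1-j}. qq a1 a2 b2 b3 c k (2*m-i))
      / ((\<Prod>k\<in>{m+2-j..m}. c (m+1-j) - c k) * (\<Prod>k\<in>{m+1..2*m-1-i}. c k - c (2*m-i)))"
    using i j m by (simp add: B_entry_def C_entry_def Let_def)
  also have "(\<Prod>k\<in>{m+1..m-1+j} - {2*m-i}. qq a1 a2 b2 b3 c (m+1-j) k) = (\<Prod>k\<in>{m+1-j..m-1}-{i}. E.q k j)"
    by (rule prod.reindex_bij_witness[of _ "\<lambda>l. 2*m-l" "\<lambda>k. 2*m-k"])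
      (use i j in \<open>auto simp: qq_def even_family_entries.q_def algebra_simps\<close>)
  also have "(\<Prod>k\<in>{i+1..m} - {m+1-j}. qq a1 a2 b2 b3 c k (2*m-i)) = (\<Prod>l\<in>{1..m-i}-{j}. E.q i l)"
    by (rule prod.reindex_bij_witness[of _ "\<lambda>l. m+1-l" "\<lambda>k. m+1-k"])
      (use i j in \<open>auto simp: qq_def even_family_entries.q_def algebra_simps\<close>)
  also have "(\<Prod>k\<in>{m+2-j..m}. c (m+1-j) - c k) = (\<Prod>l\<in>{1..j-1}. (b3 + c (m+1-j)) - (b3 + c (m+1-l)))"
    by (rule prod.reindex_bij_witness[of _ "\<lambda>l. m+1-l" "\<lambda>k. m+1-k"]) (use j in auto)
  also have "(\<Prod>k\<in>{m+1..2*m-1-i}. c k - c (2*m-i)) = (\<Prod>k\<in>{i+1..m-1}. (b2 + c (2*m-k)) - (b2 + c (2*m-i)))"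
    by (rule prod.reindex_bij_witness[of _ "\<lambda>l. 2*m-l" "\<lambda>k. 2*m-k"]) (use i in auto)
  finally show ?thesis by (simp add: even_family_entries.Z_def pp_def algebra_simps)
qed

lemma matB_plus_matC_eq_family_mat: "matB m a1 a2 b1 b2 b3 c + matC m a1 a2 b2 b3 c = E.family_mat"
proof (rule eq_matI)
  have J: "r + 1 = m + (r + 1 - m)" "1 \<le> r + 1 - m" "r + 1 - m \<le> m" if "m \<le> r" "r < 2*m" for r
    using that by auto
  have entry_BC_J:
    "\<And>s. m \<le> s \<Longrightarrow> s < 2*m \<Longrightarrow> entry_BC 1 (s+1) = E.rowJ (s+1-m)"
    "\<And>r. m \<le> r \<Longrightarrow> r < 2*m \<Longrightarrow> entry_BC (r+1) 1 = E.colJ (r+1-m)"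
    "\<And>i s. 0 < i \<Longrightarrow> i < m \<Longrightarrow> m \<le> s \<Longrightarrow> s < 2*m \<Longrightarrow> entry_BC (i+1) (s+1) = E.W i (s+1-m)"
    "\<And>i r. 0 < i \<Longrightarrow> i < m \<Longrightarrow> m \<le> r \<Longrightarrow> r < 2*m \<Longrightarrow> entry_BC (r+1) (i+1) = E.Z (r+1-m) i"
    by (metis J entry_BC_0J, metis J entry_BC_J0, metis J entry_BC_IJ, metis J entry_BC_JI)
  fix r s assume "r < dim_row E.family_mat" "s < dim_col E.family_mat"
  then have "r < 2*m" "s < 2*m" by (simp_all add: even_family_entries.family_mat_def)
  then show "(matB m a1 a2 b1 b2 b3 c + matC m a1 a2 b2 b3 c) $$ (r,s) = E.family_mat $$ (r,s)"
    \<comment> \<open>Given as premises, the block lemmas get normalised (Suc, the parameters of E) like the goal.\<close>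
    using entry_BC_00 entry_BC_0I entry_BC_I0 entry_BC_II entry_BC_JJ entry_BC_J
    by (simp add: matB_def matC_def even_family_entries.family_mat_def even_family_entries.entry_def)
qed (simp_all add: matB_def matC_def even_family_entries.family_mat_def)

end

lemma even_family_BC:
  fixes m :: nat and a1 a2 b1 b2 b3 :: complex and c :: "nat \<Rightarrow> complex"
  assumes m: "m \<ge> 2" and inj: "inj_on c {1..2*m}"
    and sum: "of_nat m * a1 + of_nat m * a2 = b1 + of_nat (m - 1) * b2 + of_nat m * b3 + (\<Sum>i=1..2*m. c i)"
  shows "even_family m a1 a2 (b1 + c (2*m)) (\<lambda>i. b2 + c (2*m - i)) (\<lambda>j. b3 + c (m + 1 - j))"
proof
  show "inj_on (\<lambda>i. b2 + c (2*m - i)) {1..m-1}"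
  proof (rule inj_onI)
    fix i i' assume i: "i \<in> {1..m-1}" "i' \<in> {1..m-1}" and "b2 + c (2*m - i) = b2 + c (2*m - i')"
    then have "2*m - i = 2*m - i'" by (intro inj_onD[OF inj]) auto
    then show "i = i'" using i by auto
  qed
  show "inj_on (\<lambda>j. b3 + c (m + 1 - j)) {1..m}"
  proof (rule inj_onI)
    fix j j' assume j: "j \<in> {1..m}" "j' \<in> {1..m}" and "b3 + c (m + 1 - j) = b3 + c (m + 1 - j')"
    then have "m + 1 - j = m + 1 - j'" by (intro inj_onD[OF inj]) auto
    then show "j = j'" using j by auto
  qed
  have "(\<Sum>i\<in>{1..m-1}. c (2*m - i)) = (\<Sum>k\<in>{m+1..2*m-1}. c k)"
    by (rule sum.reindex_bij_witness[of _ "\<lambda>k. 2*m - k" "\<lambda>i. 2*m - i"]) auto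
  moreover have "(\<Sum>j\<in>{1..m}. c (m + 1 - j)) = (\<Sum>k\<in>{1..m}. c k)"
    by (rule sum.reindex_bij_witness[of _ "\<lambda>k. m + 1 - k" "\<lambda>j. m + 1 - j"]) auto
  moreover have "(\<Sum>i=1..2*m. c i) = (\<Sum>k\<in>{1..m}. c k) + (\<Sum>k\<in>{m+1..2*m-1}. c k) + c (2*m)"
  proof -
    have "{1..2*m} = insert (2*m) ({1..m} \<union> {m+1..2*m-1})" using m by auto
    moreover have "(\<Sum>i\<in>insert (2*m) ({1..m} \<union> {m+1..2*m-1}). c i) = c (2*m) + (\<Sum>i\<in>{1..m} \<union> {m+1..2*m-1}. c i)"
      by (rule sum.insert) auto
    moreover have "(\<Sum>i\<in>{1..m} \<union> {m+1..2*m-1}. c i) = (\<Sum>k\<in>{1..m}. c k) + (\<Sum>k\<in>{m+1..2*m-1}. c k)"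
      by (rule sum.union_disjoint) auto
    ultimately show ?thesis by (simp add: add_ac)
  qed
  ultimately show "b1 + c (2*m) + (\<Sum>i\<in>{1..m-1}. b2 + c (2*m - i)) + (\<Sum>j\<in>{1..m}. b3 + c (m + 1 - j))
      = of_nat m * (a1 + a2)"
    using sum m by (simp add: sum.distrib of_nat_diff algebra_simps)
qed (rule m)

theorem theorem2p9:
  fixes m :: nat and a1 a2 b1 b2 b3 :: complex and c :: "nat \<Rightarrow> complex"
  assumes "m \<ge> 2"
    and "a1 \<noteq> a2"
    and "b1 \<noteq> b2" and "b1 \<noteq> b3" and "b2 \<noteq> b3"
    and "inj_on c {1..2*m}"
    and "of_nat m * a1 + of_nat m * a2 = b1 + of_nat (m - 1) * b2 + of_nat m * b3 + (\<Sum>i=1..2*m. c i)"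
  shows "diagonalizable (matB m a1 a2 b1 b2 b3 c + matC m a1 a2 b2 b3 c)
    \<and> (\<forall>x. eigenvalue (matB m a1 a2 b1 b2 b3 c + matC m a1 a2 b2 b3 c) x \<longleftrightarrow> x = a1 \<or> x = a2)
    \<and> order a1 (char_poly (matB m a1 a2 b1 b2 b3 c + matC m a1 a2 b2 b3 c)) = m
    \<and> order a2 (char_poly (matB m a1 a2 b1 b2 b3 c + matC m a1 a2 b2 b3 c)) = m"
proof -
  interpret even_family m a1 a2 "b1 + c (2*m)" "\<lambda>i. b2 + c (2*m - i)" "\<lambda>j. b3 + c (m + 1 - j)"
    using assms(1,6,7) by (rule even_family_BC)
  have "matB m a1 a2 b1 b2 b3 c + matC m a1 a2 b2 b3 c = family_mat"
    using assms(1) by (rule matB_plus_matC_eq_family_mat)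
  moreover have "m \<ge> 1" using assms(1) by simp
  ultimately show ?thesis
    using annihilated_trace_spectrum[OF family_mat_carrier family_mat_annihilated assms(2) _ trace_family_mat]
    by simp
qed

end
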